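(* Let $G=(V,E)$ be any finite directed graph and let $s\in V$ be a start vertex. Then, in the two-handed tile assembly model with (possibly negative) glue strengths and a diagonal glue function described in the context, there exists an initial assembly set $T$ that walks $G$ (from start vertex $s$, with respect to some label $\ell$) and is fuel efficient. Further, $T$ contains at most $O(|V|+|E|)$ distinct assemblies, each of $O(1)$ size (number of tiles bounded by a constant independent of $G$).
   Context: Model. Fix an alphabet $\Pi$ of glue types; each $g\in\Pi$ has a rational strength $str(g)$, which may be negative. A tile is a unit square of fixed orientation (no rotation) with at most one glue type on each face, placed at the center of that face; a tile may also carry a finite string label. An assembly is a set of tiles placed in the plane with pairwise non-overlapping interiors. The bond graph $G_\Upsilon$ of an assembly $\Upsilon$ has the tiles as vertices, and the weight of the edge between two tiles is the sum of strengths of the overlapping glue points of the two tiles that have equal glue type (overlapping glues of different types contribute $0$; this is the diagonal glue function). An assembly $C$ is stable if the min-cut of $G_C$ is at least $1$, and unstable otherwise. $C$ is breakable into $A$ and $B$ if $G_C$ has a cut separating it into $A$ and $B$ of weight less than $1$. Assemblies $A$ and $B$ are combinable into $C$ if some translate $B'$ of $B$ satisfies that $C=A\cup B'$ is an assembly (no overlaps) and the cut of $G_{A\cup B'}$ into $A$ and $B'$ has weight at least $1$ ($C$ need not be stable). For an initial assembly set $T$ (whose elements are stable assemblies), the set $\texttt{PROD}_T$ of producible assemblies is the smallest set containing $T$ such that whenever $A,B\in\texttt{PROD}_T$ are combinable into $C$ then $C\in\texttt{PROD}_T$, and whenever $C\in\texttt{PROD}_T$ is breakable into $A$ and $B$ then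 $A,B\in\texttt{PROD}_T$. $|a|$ denotes the number of tiles of assembly $a$. Assembly sequences. A valid assembly sequence for $T$ is a sequence $S=\langle a_1,\dots,a_k\rangle$ with each $a_i\in\texttt{PROD}_T$ such that for each $i<k$, either $a_i$ is combinable with some $b\in\texttt{PROD}_T$ into $a_{i+1}$, or $a_i$ is breakable into $a_{i+1}$ and some assembly $b$. It is $\ell$-focused (for a label $\ell$) if every $a_i$ contains at least one tile with label $\ell$, and nascent if $a_1\in T$. For a partial function $f:\texttt{PROD}_T\to V$, $f'(\langle a_1,\dots,a_k\rangle)$ is the sequence obtained by replacing each $a_i$ by $f(a_i)$ when defined and deleting $a_i$ otherwise. Walking. Given a directed graph $G=(V,E)$, start vertex $s$, and an initial assembly set $T$ in which some tiles are labeled $\ell$, $T$ walks $G$ if there is a partial function $f:\texttt{PROD}_T\to V$ such that: (1) for every $\ell$-focused nascent valid assembly sequence $S$ of $T$, $f'(S)$ is a valid walk in $G$ starting at $s$; (2) for every walk $W$ in $G$ starting at $s$, there is a nascent $\ell$-focused valid assembly sequence $S$ with $f'(S)=W$; (3) for every edge $(u,v)\in E$ and every $\ell$-focused valid assembly sequence $S$ with $f'(S)=\langle u\rangle$, there is an $\ell$-focused valid assembly sequence $R$ having $S$ as a prefix with $f'(R)=\langle u,v\rangle$. Fuel. For assemblies $a,b$, $fuel(a,b)=|b|-|a|$ if $|b|\ge|a|$ and $0$ otherwise; for $A=\langle a_1,\dots,a_k\rangle$, $fuel(A)=\sum_{i=1}^{k-1} fuel(a_i,a_{i+1})$. A $T$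 walking $G$ is fuel efficient if there is a constant $c$ such that for all $\ell$-focused nascent valid assembly sequences $S$, $fuel(S)/|f'(S)|\le c$ (i.e. $fuel(S)/|f'(S)|=O(1)$). *)

theory Defs
  imports Complex_Main
begin

datatype dir = North | East | South | West

type_synonym 'g tiletype = "(dir \<Rightarrow> 'g option) \<times> string option"

text \<open>A placed tile: the centre of the unit square (in the real plane) and its tile type.\<close>
type_synonym 'g ptile = "(real \<times> real) \<times> 'g tiletype"

type_synonym 'g assembly = "'g ptile set"

definition tpos :: "'g ptile \<Rightarrow> real \<times> real" where
  "tpos t = fst t"

definition tglue :: "'g ptile \<Rightarrow> dir \<Rightarrow> 'g option" where
  "tglue t d = fst (snd t) d"

definition tlabel :: "'g ptile \<Rightarrow> string option" where
  "tlabel t = snd (snd t)"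

fun dir_offset :: "dir \<Rightarrow> real \<times> real" where
  "dir_offset North = (0, 1/2)"
| "dir_offset East = (1/2, 0)"
| "dir_offset South = (0, -1/2)"
| "dir_offset West = (-1/2, 0)"

definition glue_point :: "'g ptile \<Rightarrow> dir \<Rightarrow> real \<times> real" where
  "glue_point t d = (fst (tpos t) + fst (dir_offset d), snd (tpos t) + snd (dir_offset d))"

definition all_dirs :: "dir set" where
  "all_dirs = {North, East, South, West}"

text \<open>Interiors of the unit squares centred at the two tiles' positions intersect.\<close>
definition overlap :: "'g ptile \<Rightarrow> 'g ptile \<Rightarrow> bool" where
  "overlap t1 t2 \<longleftrightarrow> \<bar>fst (tpos t1) - fst (tpos t2)\<bar> < 1 \<and> \<bar>snd (tpos t1) - snd (tpos t2)\<bar> < 1"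

definition is_assembly :: "'g assembly \<Rightarrow> bool" where
  "is_assembly A \<longleftrightarrow> finite A \<and> A \<noteq> {} \<and> (\<forall>t1\<in>A. \<forall>t2\<in>A. t1 \<noteq> t2 \<longrightarrow> \<not> overlap t1 t2)"

text \<open>Weight of the bond-graph edge between two tiles (diagonal glue function):
  sum of strengths of overlapping glue points of equal glue type.\<close>
definition edge_weight :: "('g \<Rightarrow> rat) \<Rightarrow> 'g ptile \<Rightarrow> 'g ptile \<Rightarrow> rat" where
  "edge_weight str t1 t2 =
     (\<Sum>d1\<in>all_dirs. \<Sum>d2\<in>all_dirs.
        (case (tglue t1 d1, tglue t2 d2) of
           (Some g1, Some g2) \<Rightarrow>
              if g1 = g2 \<and> glue_point t1 d1 = glue_point t2 d2 then str g1 else 0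
         | _ \<Rightarrow> 0))"

definition cut_weight :: "('g \<Rightarrow> rat) \<Rightarrow> 'g assembly \<Rightarrow> 'g assembly \<Rightarrow> rat" where
  "cut_weight str A B = (\<Sum>a\<in>A. \<Sum>b\<in>B. edge_weight str a b)"

definition stable_asm :: "('g \<Rightarrow> rat) \<Rightarrow> 'g assembly \<Rightarrow> bool" where
  "stable_asm str C \<longleftrightarrow> is_assembly C \<and>
     (\<forall>A B. A \<union> B = C \<and> A \<inter> B = {} \<and> A \<noteq> {} \<and> B \<noteq> {} \<longrightarrow> cut_weight str A B \<ge> 1)"

definition breakable :: "('g \<Rightarrow> rat) \<Rightarrow> 'g assembly \<Rightarrow> 'g assembly \<Rightarrow> 'g assembly \<Rightarrow> bool" where
  "breakable str C A B \<longleftrightarrow> is_assembly C \<and> A \<union> B = C \<and> A \<inter> B = {} \<and> A \<noteq> {} \<and> B \<noteq> {}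
      \<and> cut_weight str A B < 1"

definition translate :: "real \<times> real \<Rightarrow> 'g assembly \<Rightarrow> 'g assembly" where
  "translate v B = (\<lambda>t. ((fst (tpos t) + fst v, snd (tpos t) + snd v), snd t)) ` B"

definition combinable :: "('g \<Rightarrow> rat) \<Rightarrow> 'g assembly \<Rightarrow> 'g assembly \<Rightarrow> 'g assembly \<Rightarrow> bool" where
  "combinable str A B C \<longleftrightarrow> is_assembly A \<and> is_assembly B \<and>
     (\<exists>v. let B' = translate v B in
        A \<inter> B' = {} \<and> C = A \<union> B' \<and> is_assembly C \<and> cut_weight str A B' \<ge> 1)"

inductive_set producible :: "('g \<Rightarrow> rat) \<Rightarrow> 'g assembly set \<Rightarrow> 'g assembly set"
  for str :: "'g \<Rightarrow> rat" and T :: "'g assembly set" where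
  init: "a \<in> T \<Longrightarrow> a \<in> producible str T"
| comb: "A \<in> producible str T \<Longrightarrow> B \<in> producible str T \<Longrightarrow> combinable str A B C \<Longrightarrow> C \<in> producible str T"
| brk1: "C \<in> producible str T \<Longrightarrow> breakable str C A B \<Longrightarrow> A \<in> producible str T"
| brk2: "C \<in> producible str T \<Longrightarrow> breakable str C A B \<Longrightarrow> B \<in> producible str T"

definition valid_seq :: "('g \<Rightarrow> rat) \<Rightarrow> 'g assembly set \<Rightarrow> 'g assembly list \<Rightarrow> bool" where
  "valid_seq str T S \<longleftrightarrow> S \<noteq> [] \<and> set S \<subseteq> producible str T \<and>
     (\<forall>i. Suc i < length S \<longrightarrow>
        (\<exists>b\<in>producible str T. combinable str (S ! i) b (S ! Suc i))
      \<or> (\<exists>b. breakable str (S ! i) (S ! Suc i) b))"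

definition focused :: "string \<Rightarrow> 'g assembly list \<Rightarrow> bool" where
  "focused l S \<longleftrightarrow> (\<forall>a\<in>set S. \<exists>t\<in>a. tlabel t = Some l)"

definition nascent :: "'g assembly set \<Rightarrow> 'g assembly list \<Rightarrow> bool" where
  "nascent T S \<longleftrightarrow> S \<noteq> [] \<and> hd S \<in> T"

definition fprime :: "('g assembly \<Rightarrow> 'v option) \<Rightarrow> 'g assembly list \<Rightarrow> 'v list" where
  "fprime f S = List.map_filter f S"

definition is_walk :: "('v \<times> 'v) set \<Rightarrow> 'v \<Rightarrow> 'v list \<Rightarrow> bool" where
  "is_walk E s W \<longleftrightarrow> W \<noteq> [] \<and> hd W = s \<and> (\<forall>i. Suc i < length W \<longrightarrow> (W ! i, W ! Suc i) \<in> E)"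

definition walking_fun ::
  "('g \<Rightarrow> rat) \<Rightarrow> 'g assembly set \<Rightarrow> string \<Rightarrow> 'v set \<Rightarrow> ('v \<times> 'v) set \<Rightarrow> 'v
     \<Rightarrow> ('g assembly \<Rightarrow> 'v option) \<Rightarrow> bool" where
  "walking_fun str T l V E s f \<longleftrightarrow>
     (\<forall>a v. f a = Some v \<longrightarrow> a \<in> producible str T \<and> v \<in> V)
   \<and> (\<forall>S. focused l S \<and> nascent T S \<and> valid_seq str T S \<longrightarrow> is_walk E s (fprime f S))
   \<and> (\<forall>W. is_walk E s W \<longrightarrow>
          (\<exists>S. nascent T S \<and> focused l S \<and> valid_seq str T S \<and> fprime f S = W))
   \<and> (\<forall>u v S. (u, v) \<in> E \<and> focused l S \<and> valid_seq str T S \<and> fprime f S = [u] \<longrightarrow>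
          (\<exists>R'. focused l (S @ R') \<and> valid_seq str T (S @ R') \<and> fprime f (S @ R') = [u, v]))"

definition walks :: "('g \<Rightarrow> rat) \<Rightarrow> 'g assembly set \<Rightarrow> string \<Rightarrow> 'v set \<Rightarrow> ('v \<times> 'v) set \<Rightarrow> 'v \<Rightarrow> bool" where
  "walks str T l V E s \<longleftrightarrow> (\<exists>f. walking_fun str T l V E s f)"

definition fuel_step :: "'g assembly \<Rightarrow> 'g assembly \<Rightarrow> nat" where
  "fuel_step a b = (if card b \<ge> card a then card b - card a else 0)"

definition fuel :: "'g assembly list \<Rightarrow> nat" where
  "fuel S = (\<Sum>i<length S - 1. fuel_step (S ! i) (S ! Suc i))"

definition walks_fuel_efficiently ::
  "('g \<Rightarrow> rat) \<Rightarrow> 'g assembly set \<Rightarrow> string \<Rightarrow> 'v set \<Rightarrow> ('v \<times> 'v) set \<Rightarrow> 'v \<Rightarrow> bool" where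
  "walks_fuel_efficiently str T l V E s \<longleftrightarrow>
     (\<exists>f. walking_fun str T l V E s f \<and>
        (\<exists>c::real. \<forall>S. focused l S \<and> nascent T S \<and> valid_seq str T S \<longrightarrow>
            real (fuel S) / real (length (fprime f S)) \<le> c))"

end

theory Submission
  imports Defs
begin

text \<open>
  Every producible assembly carrying the label is a \<^emph>\<open>ribbon\<close>: a two-row zig-zag strip that
  starts with a labelled seed column and encodes a walk \<open>s = v\<^sub>0, \<dots>, v\<^sub>n\<close>; its last tile exposes
  a glue naming \<open>v\<^sub>n\<close>, alternately on its north and on its south face. For every edge \<open>(u, v)\<close>
  there are two bricks (for the top and for the bottom row): two tiles held together by a
  strength-1 glue, whose left tile carries a half-strength glue naming \<open>u\<close> and a half-strength
  glue on its west face. A brick therefore attaches only cooperatively, by two half-strength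
  bonds, at the single position next to the end of a ribbon ending in \<open>u\<close>; this extends the
  walk by \<open>v\<close>. Ribbons and bricks are stable, so nothing ever breaks, two ribbons never bind,
  and two bricks bind with strength below 1. Hence the producible assemblies are exactly the
  ribbons of walks and the bricks, mapping a ribbon to the last vertex of its walk walks the
  graph, and every step consumes exactly one brick, i.e. two tiles of fuel.
\<close>

section \<open>Bonds between placed tiles\<close>

fun opposite :: "dir \<Rightarrow> dir" where
  "opposite North = South" | "opposite South = North" | "opposite East = West" | "opposite West = East"

fun neighbour :: "real \<times> real \<Rightarrow> dir \<Rightarrow> real \<times> real" where
  "neighbour (x, y) North = (x, y + 1)" | "neighbour (x, y) South = (x, y - 1)"
| "neighbour (x, y) East = (x + 1, y)" | "neighbour (x, y) West = (x - 1, y)"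

lemma neighbour_dir_inj: "neighbour P d = neighbour P d' \<Longrightarrow> d = d'"
  by (cases P; cases d; cases d') auto

lemma neighbour_pos_inj: "neighbour P d = neighbour Q d \<Longrightarrow> P = Q"
  by (cases P; cases Q; cases d) auto

lemma neighbour_opposite: "neighbour (neighbour P d) (opposite d) = P"
  by (cases P; cases d) auto

lemma glue_point_opposite_iff:
  "glue_point a d = glue_point b (opposite d) \<longleftrightarrow> tpos b = neighbour (tpos a) d"
  by (cases d; cases "tpos a"; cases "tpos b") (auto simp: glue_point_def)

lemma glue_point_eq_overlap:
  "glue_point a d1 = glue_point b d2 \<Longrightarrow> d2 \<noteq> opposite d1 \<Longrightarrow> overlap a b"
  by (cases d1; cases d2; cases "tpos a"; cases "tpos b") (auto simp: glue_point_def overlap_def)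

definition glue_term :: "('g \<Rightarrow> rat) \<Rightarrow> 'g ptile \<Rightarrow> 'g ptile \<Rightarrow> dir \<Rightarrow> dir \<Rightarrow> rat" where
  "glue_term str t1 t2 d1 d2 = (case (tglue t1 d1, tglue t2 d2) of
     (Some g1, Some g2) \<Rightarrow> if g1 = g2 \<and> glue_point t1 d1 = glue_point t2 d2 then str g1 else 0
   | _ \<Rightarrow> 0)"

lemma edge_weight_glue_terms:
  "edge_weight str a b = (\<Sum>d1\<in>all_dirs. \<Sum>d2\<in>all_dirs. glue_term str a b d1 d2)"
  unfolding edge_weight_def glue_term_def ..

lemma glue_term_nonzero:
  "glue_term str a b d1 d2 \<noteq> 0 \<Longrightarrow> \<exists>g. tglue a d1 = Some g \<and> tglue b d2 = Some g
     \<and> glue_point a d1 = glue_point b d2 \<and> glue_term str a b d1 d2 = str g"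
  unfolding glue_term_def by (auto split: option.splits if_splits)

lemma glue_term_sym: "glue_term str a b d1 d2 = glue_term str b a d2 d1"
  unfolding glue_term_def by (auto split: option.splits)

lemma edge_weight_sym: "edge_weight str a b = edge_weight str b a"
  unfolding edge_weight_glue_terms by (subst sum.swap) (simp add: glue_term_sym)

lemma cut_weight_sym: "cut_weight str A B = cut_weight str B A"
  unfolding cut_weight_def by (subst sum.swap) (simp add: edge_weight_sym)

lemma edge_weight_nonzero_neighbour:
  assumes "\<not> overlap a b" "edge_weight str a b \<noteq> 0"
  shows "\<exists>d g. tglue a d = Some g \<and> tglue b (opposite d) = Some g
           \<and> tpos b = neighbour (tpos a) d \<and> edge_weight str a b = str g"
proof -
  have not_facing: "glue_term str a b d1 d2 = 0" if "d2 \<noteq> opposite d1" for d1 d2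
    using glue_term_nonzero[of str a b d1 d2] glue_point_eq_overlap[of a d1 b d2] that assms(1)
    by auto
  have not_adjacent: "glue_term str a b d (opposite d) = 0" if "tpos b \<noteq> neighbour (tpos a) d" for d
    using glue_term_nonzero[of str a b d "opposite d"] glue_point_opposite_iff[of a d b] that by auto
  from assms(2) obtain d1 d2 where nz: "glue_term str a b d1 d2 \<noteq> 0"
    unfolding edge_weight_glue_terms by (meson sum.not_neutral_contains_not_neutral)
  hence d2: "d2 = opposite d1" using not_facing by blast
  from glue_term_nonzero[OF nz] obtain g where g: "tglue a d1 = Some g" "tglue b d2 = Some g"
    "glue_point a d1 = glue_point b d2" "glue_term str a b d1 d2 = str g" by blast
  have pos: "tpos b = neighbour (tpos a) d1" using g(3) d2 glue_point_opposite_iff[of a d1 b] by simp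
  have other: "glue_term str a b d (opposite d) = 0" if "d \<noteq> d1" for d
    using not_adjacent[of d] pos neighbour_dir_inj[of "tpos a" d1 d] that by auto
  have "edge_weight str a b = glue_term str a b d1 (opposite d1)"
    unfolding edge_weight_glue_terms all_dirs_def
    using not_facing other[of North] other[of East] other[of South] other[of West]
    by (cases d1) (auto simp: d2)
  then show ?thesis using g d2 pos by auto
qed

lemma edge_weight_nonneg: "(\<And>g. str g \<ge> 0) \<Longrightarrow> edge_weight str a b \<ge> 0"
  unfolding edge_weight_def by (intro sum_nonneg) (auto split: option.splits)

lemma edge_weight_le_cut_weight:
  assumes "\<And>g. str g \<ge> 0" "finite A" "finite B" "a \<in> A" "b \<in> B"
  shows "edge_weight str a b \<le> cut_weight str A B"
proof -
  have "edge_weight str a b \<le> (\<Sum>b'\<in>B. edge_weight str a b')"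
    using assms by (intro member_le_sum) (auto intro: edge_weight_nonneg)
  also have "\<dots> \<le> cut_weight str A B" unfolding cut_weight_def
    using assms by (intro member_le_sum[where f="\<lambda>a. \<Sum>b'\<in>B. edge_weight str a b'"])
      (auto intro!: sum_nonneg edge_weight_nonneg)
  finally show ?thesis .
qed

lemma edge_weight_pair_le_cut_weight:
  assumes "\<And>g. str g \<ge> 0" "finite A" "finite B" "a1 \<in> A" "a2 \<in> A" "a1 \<noteq> a2" "b \<in> B"
  shows "edge_weight str a1 b + edge_weight str a2 b \<le> cut_weight str A B"
proof -
  have "edge_weight str a1 b + edge_weight str a2 b = (\<Sum>a\<in>{a1,a2}. edge_weight str a b)"
    using assms by simp
  also have "\<dots> \<le> (\<Sum>a\<in>A. edge_weight str a b)"
    using assms by (intro sum_mono2) (auto intro: edge_weight_nonneg)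
  also have "\<dots> \<le> (\<Sum>a\<in>A. \<Sum>b'\<in>B. edge_weight str a b')"
    using assms by (intro sum_mono member_le_sum) (auto intro: edge_weight_nonneg)
  finally show ?thesis unfolding cut_weight_def .
qed

lemma assembly_union_not_overlap:
  assumes "is_assembly (A \<union> B)" "A \<inter> B = {}" "a \<in> A" "b \<in> B"
  shows "\<not> overlap a b"
proof -
  have "a \<noteq> b" using assms(2-4) by blast
  thus ?thesis using assms(1,3,4) unfolding is_assembly_def by blast
qed

lemma assembly_union_tpos_neq:
  assumes "is_assembly (A \<union> B)" "A \<inter> B = {}" "a \<in> A" "b \<in> B"
  shows "tpos a \<noteq> tpos b"
  using assembly_union_not_overlap[OF assms] by (auto simp: overlap_def)

lemma stable_not_breakable: "stable_asm str C \<Longrightarrow> \<not> breakable str C A B"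
  unfolding stable_asm_def breakable_def by force

section \<open>Tiles and bricks\<close>

definition tile_type ::
  "nat option \<Rightarrow> nat option \<Rightarrow> nat option \<Rightarrow> nat option \<Rightarrow> string option \<Rightarrow> nat tiletype" where
  "tile_type n e s w lab = ((\<lambda>d. case d of North \<Rightarrow> n | East \<Rightarrow> e | South \<Rightarrow> s | West \<Rightarrow> w), lab)"

text \<open>
  Glue \<open>2\<close> holds the seed column together and glue \<open>1\<close> the two halves of a brick (strength 1);
  glue \<open>0\<close> on west faces and the vertex glues \<open>glue_up v\<close>, \<open>glue_down v\<close> naming a vertex
  \<open>v\<close> have strength 1/2, so a brick needs both of them to attach.
\<close>

definition glue_up :: "nat \<Rightarrow> nat" where "glue_up v = 3 + 2 * v"
definition glue_down :: "nat \<Rightarrow> nat" where "glue_down v = 4 + 2 * v"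

definition strength :: "nat \<Rightarrow> rat" where
  "strength g = (if g = 1 \<or> g = 2 then 1 else 1/2)"

definition "seed_bottom = tile_type (Some 2) (Some 1) None None (Some ''l'')"
definition "seed_top = tile_type None (Some 0) (Some 2) None None"
definition "top_left a = tile_type None (Some 1) (Some (glue_up a)) (Some 0) None"
definition "top_right b = tile_type None (Some 0) (Some (glue_down b)) (Some 1) None"
definition "bottom_left a = tile_type (Some (glue_down a)) (Some 1) None (Some 0) None"
definition "bottom_right b = tile_type (Some (glue_up b)) (Some 0) None (Some 1) None"

lemmas tile_defs = seed_bottom_def seed_top_def top_left_def top_right_def bottom_left_def
  bottom_right_def tile_type_def

lemma strength_nonneg: "strength g \<ge> 0"
  by (simp add: strength_def)

lemma tile_type_simps [simp]:
  "tglue (P, tile_type n e s w lab) North = n"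
  "tglue (P, tile_type n e s w lab) East = e"
  "tglue (P, tile_type n e s w lab) South = s"
  "tglue (P, tile_type n e s w lab) West = w"
  "tlabel (P, tile_type n e s w lab) = lab"
  "tpos (P, X) = P"
  by (auto simp: tglue_def tile_type_def tlabel_def tpos_def)

lemma vertex_glue_simps [simp]:
  "glue_up x = glue_up y \<longleftrightarrow> x = y" "glue_down x = glue_down y \<longleftrightarrow> x = y"
  "glue_up x \<noteq> glue_down y" "glue_down x \<noteq> glue_up y"
  "glue_up x \<noteq> 0" "glue_up x \<noteq> Suc 0" "glue_up x \<noteq> 2"
  "glue_down x \<noteq> 0" "glue_down x \<noteq> Suc 0" "glue_down x \<noteq> 2"
  "0 \<noteq> glue_up x" "Suc 0 \<noteq> glue_up x" "2 \<noteq> glue_up x"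
  "0 \<noteq> glue_down x" "Suc 0 \<noteq> glue_down x" "2 \<noteq> glue_down x"
  unfolding glue_up_def glue_down_def by presburger+

definition pos_add :: "real \<times> real \<Rightarrow> real \<times> real \<Rightarrow> real \<times> real" where
  "pos_add p v = (fst p + fst v, snd p + snd v)"

definition brick_left :: "real \<times> real \<Rightarrow> bool \<Rightarrow> nat \<Rightarrow> nat ptile" where
  "brick_left q upper a = (q, if upper then top_left a else bottom_left a)"

definition brick_right :: "real \<times> real \<Rightarrow> bool \<Rightarrow> nat \<Rightarrow> nat ptile" where
  "brick_right q upper b = ((fst q + 1, snd q), if upper then top_right b else bottom_right b)"

definition brick :: "real \<times> real \<Rightarrow> bool \<Rightarrow> nat \<Rightarrow> nat \<Rightarrow> nat assembly" where
  "brick q upper a b = {brick_left q upper a, brick_right q upper b}"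

lemma brick_left_neq_right: "brick_left q upper a \<noteq> brick_right q upper b"
  by (simp add: brick_left_def brick_right_def prod_eq_iff)

lemma brick_right_pos: "tpos (brick_right q upper b) = neighbour (tpos (brick_left q upper a)) East"
  by (cases q) (simp add: brick_left_def brick_right_def tpos_def)

lemma translate_brick: "translate v (brick q upper a b) = brick (pos_add q v) upper a b"
  unfolding translate_def brick_def brick_left_def brick_right_def
  by (auto simp: pos_add_def tpos_def)

lemma brick_unlabelled: "t \<in> brick q upper a b \<Longrightarrow> tlabel t = None"
  by (cases upper) (auto simp: brick_def brick_left_def brick_right_def tlabel_def tile_defs)

section \<open>Ribbons\<close>

text \<open>
  The ribbon of a walk \<open>w = [v\<^sub>0, \<dots>, v\<^sub>n]\<close> occupies cells \<open>(x, y)\<close>, \<open>y \<in> {0, 1}\<close>. Cells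
  \<open>(0, 0)\<close>, \<open>(0, 1)\<close> form the seed column, \<open>(1, 0)\<close> is the right half of a brick for \<open>v\<^sub>0\<close>, and for
  \<open>1 \<le> i \<le> n\<close> the cells \<open>(i, r)\<close>, \<open>(i + 1, r)\<close> with \<open>r = 1\<close> iff \<open>i\<close> is odd hold the brick of the
  step \<open>(v\<^bsub>i-1\<^esub>, v\<^sub>i)\<close>.
\<close>

fun ribbon_type :: "nat list \<Rightarrow> nat \<times> nat \<Rightarrow> nat tiletype" where
  "ribbon_type w (x, y) = (if x = 0 then (if y = 0 then seed_bottom else seed_top)
     else if y = 0 then (if odd x then bottom_right (w ! (x - 1)) else bottom_left (w ! (x - 1)))
     else (if odd x then top_left (w ! (x - 1)) else top_right (w ! (x - 1))))"

definition extends_top :: "nat list \<Rightarrow> bool" where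
  "extends_top w \<longleftrightarrow> even (length w - 1)"

definition bottom_end :: "nat list \<Rightarrow> nat" where
  "bottom_end w = (if extends_top w then length w else length w - 1)"

definition top_end :: "nat list \<Rightarrow> nat" where
  "top_end w = (if extends_top w then length w - 1 else length w)"

definition ribbon_cells :: "nat list \<Rightarrow> (nat \<times> nat) set" where
  "ribbon_cells w = {(x, y). (y = 0 \<and> x \<le> bottom_end w) \<or> (y = 1 \<and> x \<le> top_end w)}"

definition ribbon_tile :: "real \<times> real \<Rightarrow> nat list \<Rightarrow> nat \<times> nat \<Rightarrow> nat ptile" where
  "ribbon_tile p w c = ((fst p + real (fst c), snd p + real (snd c)), ribbon_type w c)"

definition ribbon :: "real \<times> real \<Rightarrow> nat list \<Rightarrow> nat assembly" where
  "ribbon p w = ribbon_tile p w ` ribbon_cells w"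

definition extension_pos :: "real \<times> real \<Rightarrow> nat list \<Rightarrow> real \<times> real" where
  "extension_pos p w = (fst p + real (length w), snd p + (if extends_top w then 1 else 0))"

lemmas ribbon_shape_defs = ribbon_cells_def bottom_end_def top_end_def extends_top_def

lemma finite_ribbon_cells: "finite (ribbon_cells w)"
proof -
  have "ribbon_cells w \<subseteq> {..max (bottom_end w) (top_end w)} \<times> {..1}"
    unfolding ribbon_cells_def by auto
  thus ?thesis by (rule finite_subset) auto
qed

lemma tglue_ribbon_tile: "tglue (ribbon_tile p w c) d = fst (ribbon_type w c) d"
  by (simp add: tglue_def ribbon_tile_def)

lemma tpos_ribbon_tile: "tpos (ribbon_tile p w c) = (fst p + real (fst c), snd p + real (snd c))"
  by (simp add: tpos_def ribbon_tile_def)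

lemma inj_ribbon_tile: "inj_on (ribbon_tile p w) X"
  by (auto simp: inj_on_def ribbon_tile_def)

lemma ribbon_tile_overlap: "overlap (ribbon_tile p w c) (ribbon_tile p w c') \<Longrightarrow> c = c'"
proof -
  assume "overlap (ribbon_tile p w c) (ribbon_tile p w c')"
  hence "\<bar>real (fst c) - real (fst c')\<bar> < 1" "\<bar>real (snd c) - real (snd c')\<bar> < 1"
    by (auto simp: overlap_def tpos_ribbon_tile)
  hence "fst c = fst c'" "snd c = snd c'" by linarith+
  thus ?thesis by (simp add: prod_eq_iff)
qed

lemma ribbon_assembly: "is_assembly (ribbon p w)"
  unfolding is_assembly_def ribbon_def
proof (intro conjI)
  show "finite (ribbon_tile p w ` ribbon_cells w)" using finite_ribbon_cells by simp
  show "ribbon_tile p w ` ribbon_cells w \<noteq> {}" by (auto simp: ribbon_cells_def)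
  show "\<forall>t1\<in>ribbon_tile p w ` ribbon_cells w. \<forall>t2\<in>ribbon_tile p w ` ribbon_cells w.
      t1 \<noteq> t2 \<longrightarrow> \<not> overlap t1 t2"
    using ribbon_tile_overlap by blast
qed

lemma finite_ribbon: "finite (ribbon p w)"
  using ribbon_assembly unfolding is_assembly_def by blast

lemma card_ribbon: "w \<noteq> [] \<Longrightarrow> card (ribbon p w) = 2 * length w + 1"
proof -
  assume w: "w \<noteq> []"
  have "card (ribbon p w) = card (ribbon_cells w)"
    unfolding ribbon_def by (rule card_image) (rule inj_ribbon_tile)
  also have "ribbon_cells w = (\<lambda>x. (x, 0::nat)) ` {..bottom_end w} \<union> (\<lambda>x. (x, 1)) ` {..top_end w}"
    unfolding ribbon_cells_def by auto
  also have "card \<dots> = (bottom_end w + 1) + (top_end w + 1)"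
    by (subst card_Un_disjoint) (auto simp: card_image inj_on_def)
  also have "\<dots> = 2 * length w + 1"
    using w by (auto simp: bottom_end_def top_end_def)
  finally show ?thesis .
qed

lemma translate_ribbon: "translate v (ribbon p w) = ribbon (pos_add p v) w"
  unfolding translate_def ribbon_def image_image
  by (rule image_cong) (auto simp: ribbon_tile_def pos_add_def tpos_def)

lemma ribbon_type_snoc: "c \<in> ribbon_cells w \<Longrightarrow> ribbon_type (w @ [u]) c = ribbon_type w c"
  by (cases c) (auto simp: ribbon_shape_defs nth_append split: if_splits)

lemma ribbon_cells_snoc:
  "w \<noteq> [] \<Longrightarrow> ribbon_cells (w @ [u]) = ribbon_cells w \<union>
     {(length w, if extends_top w then 1 else 0), (length w + 1, if extends_top w then 1 else 0)}"
  by (auto simp: ribbon_shape_defs)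

lemma ribbon_snoc:
  assumes w: "w \<noteq> []"
  shows "ribbon p (w @ [u]) = ribbon p w \<union> brick (extension_pos p w) (extends_top w) (last w) u"
proof -
  let ?r = "if extends_top w then 1 else 0 :: nat"
  have "ribbon p (w @ [u]) = ribbon_tile p (w @ [u]) ` ribbon_cells w
      \<union> ribbon_tile p (w @ [u]) ` {(length w, ?r), (length w + 1, ?r)}"
    unfolding ribbon_def ribbon_cells_snoc[OF w] by blast
  also have "ribbon_tile p (w @ [u]) ` ribbon_cells w = ribbon p w"
    unfolding ribbon_def by (rule image_cong) (auto simp: ribbon_tile_def ribbon_type_snoc)
  also have "ribbon_tile p (w @ [u]) ` {(length w, ?r), (length w + 1, ?r)}
      = brick (extension_pos p w) (extends_top w) (last w) u"
  proof -
    obtain n where n: "length w = Suc n" using w by (cases w) auto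
    have "last w = w ! n" using w n by (simp add: last_conv_nth)
    thus ?thesis using n
      by (auto simp: ribbon_tile_def brick_def brick_left_def brick_right_def extension_pos_def
          extends_top_def nth_append)
  qed
  finally show ?thesis .
qed

lemma ribbon_extension_disjoint:
  assumes w: "w \<noteq> []"
  shows "ribbon p w \<inter> brick (extension_pos p w) (extends_top w) (last w) u = {}"
proof -
  obtain n where "length w = Suc n" using w by (cases w) auto
  thus ?thesis unfolding ribbon_def
    by (auto simp: ribbon_tile_def brick_def brick_left_def brick_right_def extension_pos_def
        ribbon_shape_defs)
qed

lemmas edge_weight_unfold = edge_weight_def all_dirs_def glue_point_def ribbon_tile_def
  seed_bottom_def seed_top_def top_left_def top_right_def bottom_left_def bottom_right_def
  glue_up_def glue_down_def strength_def

lemma edge_weight_seed_east: "edge_weight strength (ribbon_tile p w (0, 0)) (ribbon_tile p w (1, 0)) = 1"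
  by (simp add: edge_weight_unfold)

lemma edge_weight_seed_north: "edge_weight strength (ribbon_tile p w (0, 0)) (ribbon_tile p w (0, 1)) = 1"
  by (simp add: edge_weight_unfold)

lemma edge_weight_brick_inner:
  "k \<ge> 1 \<Longrightarrow> r = (if odd k then 1 else 0)
     \<Longrightarrow> edge_weight strength (ribbon_tile p w (k, r)) (ribbon_tile p w (k + 1, r)) = 1"
  by (simp add: edge_weight_unfold)

lemma edge_weight_brick_west:
  "k \<ge> 1 \<Longrightarrow> r = (if odd k then 1 else 0)
     \<Longrightarrow> edge_weight strength (ribbon_tile p w (k - 1, r)) (ribbon_tile p w (k, r)) = 1/2"
  by (cases k) (auto simp: edge_weight_unfold)

lemma edge_weight_brick_vertical:
  "k \<ge> 1 \<Longrightarrow> r = (if odd k then 1 else 0)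
     \<Longrightarrow> edge_weight strength (ribbon_tile p w (k, 1 - r)) (ribbon_tile p w (k, r)) = 1/2"
  by (auto simp: edge_weight_unfold)

text \<open>Index of the brick a ribbon cell belongs to; the seed column and \<open>(1, 0)\<close> get index 0.\<close>

definition brick_index :: "nat \<times> nat \<Rightarrow> nat" where
  "brick_index c = (if fst c = 0 then 0 else if odd (fst c) \<longleftrightarrow> snd c = 1 then fst c else fst c - 1)"

lemma brick_index_0:
  "c \<in> ribbon_cells w \<Longrightarrow> brick_index c = 0 \<Longrightarrow> c = (0, 0) \<or> c = (1, 0) \<or> c = (0, 1)"
  by (cases c) (auto simp: brick_index_def ribbon_cells_def split: if_splits)

lemma ribbon_brick_cells:
  assumes w: "w \<noteq> []" and c: "c \<in> ribbon_cells w" "brick_index c = k"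
    and k: "k \<ge> 1" and r: "r = (if odd k then 1 else 0)"
  shows "c = (k, r) \<or> c = (k + 1, r)"
    and "(k, r) \<in> ribbon_cells w" "(k + 1, r) \<in> ribbon_cells w"
    and "(k - 1, r) \<in> ribbon_cells w" "(k, 1 - r) \<in> ribbon_cells w"
    and "brick_index (k - 1, r) < k" "brick_index (k, 1 - r) < k"
proof -
  obtain n where n: "length w = Suc n" using w by (cases w) auto
  show c_cases: "c = (k, r) \<or> c = (k + 1, r)"
    using c k by (cases c) (auto simp: brick_index_def r ribbon_cells_def split: if_splits)
  have parity: "k + 1 \<le> j" if "k \<le> j" "odd k \<longleftrightarrow> even j" for j
    using that by (metis Suc_eq_plus1 le_neq_implies_less less_eq_Suc_le)
  show right: "(k + 1, r) \<in> ribbon_cells w"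
    using c_cases c(1) n k parity[of n] parity[of "Suc n"]
    by (auto simp: ribbon_shape_defs r split: if_splits)
  show "(k, r) \<in> ribbon_cells w" "(k - 1, r) \<in> ribbon_cells w"
    using right by (auto simp: ribbon_cells_def)
  show "(k, 1 - r) \<in> ribbon_cells w"
    using right n by (auto simp: ribbon_shape_defs r split: if_splits)
  show "brick_index (k - 1, r) < k" "brick_index (k, 1 - r) < k"
    using k by (auto simp: brick_index_def r)
qed

lemma ribbon_cut_first_brick:
  assumes AB: "A \<union> B = ribbon p w" "A \<inter> B = {}" and w: "w \<noteq> []"
    and c: "c \<in> ribbon_cells w" "ribbon_tile p w c \<in> B" "brick_index c = k" and k: "k \<ge> 1"
    and earlier_in_A: "\<And>c'. c' \<in> ribbon_cells w \<Longrightarrow> brick_index c' < k \<Longrightarrow> ribbon_tile p w c' \<in> A"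
  shows "cut_weight strength A B \<ge> 1"
proof -
  have fin: "finite A" "finite B"
    using AB(1) finite_ribbon finite_subset[of A "ribbon p w"] finite_subset[of B "ribbon p w"] by auto
  note le_cut = edge_weight_le_cut_weight[of strength, OF strength_nonneg fin]
  have in_A: "ribbon_tile p w c' \<in> A" if "c' \<in> ribbon_cells w" "ribbon_tile p w c' \<notin> B" for c'
    using that AB(1) unfolding ribbon_def by blast
  define r :: nat where "r = (if odd k then 1 else 0)"
  note cells = ribbon_brick_cells[OF w c(1,3) k r_def]
  show ?thesis
  proof (cases "ribbon_tile p w (k, r) \<in> B")
    case left_B: True
    show ?thesis
    proof (cases "ribbon_tile p w (k + 1, r) \<in> B")
      case True
      have "ribbon_tile p w (k - 1, r) \<noteq> ribbon_tile p w (k, 1 - r)"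
        using k by (auto simp: ribbon_tile_def r_def)
      from edge_weight_pair_le_cut_weight[of strength, OF strength_nonneg fin
          earlier_in_A[OF cells(4,6)] earlier_in_A[OF cells(5,7)] this left_B]
      show ?thesis
        using edge_weight_brick_west[OF k r_def, of p w] edge_weight_brick_vertical[OF k r_def, of p w]
        by linarith
    next
      case False
      hence "ribbon_tile p w (k + 1, r) \<in> A" using in_A cells(3) by blast
      from le_cut[OF this left_B] show ?thesis
        using edge_weight_brick_inner[OF k r_def] by (simp add: edge_weight_sym)
    qed
  next
    case False
    hence left_A: "ribbon_tile p w (k, r) \<in> A" using in_A cells(2) by blast
    hence "c = (k + 1, r)" using cells(1) c(2) AB(2) by auto
    with le_cut[OF left_A c(2)] show ?thesis
      using edge_weight_brick_inner[OF k r_def] by simp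
  qed
qed

text \<open>
  If the seed is on the \<open>A\<close> side, look at the first brick with a tile in \<open>B\<close>: either its own
  strength-1 bond is cut, or its left tile is in \<open>B\<close> while both of its half-strength partners,
  belonging to earlier bricks, are in \<open>A\<close>.
\<close>

lemma ribbon_cut_from_seed:
  assumes AB: "A \<union> B = ribbon p w" "A \<inter> B = {}" "B \<noteq> {}"
    and seed: "ribbon_tile p w (0, 0) \<in> A" and w: "w \<noteq> []"
  shows "cut_weight strength A B \<ge> 1"
proof (cases "ribbon_tile p w (1, 0) \<in> B \<or> ribbon_tile p w (0, 1) \<in> B")
  case True
  have fin: "finite A" "finite B"
    using AB(1) finite_ribbon finite_subset[of A "ribbon p w"] finite_subset[of B "ribbon p w"] by auto
  note le_cut = edge_weight_le_cut_weight[of strength, OF strength_nonneg fin seed]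
  from True show ?thesis
    using le_cut edge_weight_seed_east[of p w] edge_weight_seed_north[of p w] by (elim disjE) fastforce+
next
  case seed_brick_in_A: False
  define CB where "CB = {c \<in> ribbon_cells w. ribbon_tile p w c \<in> B}"
  have "CB \<noteq> {}" using AB unfolding CB_def ribbon_def by auto
  define k where "k = (LEAST k. \<exists>c\<in>CB. brick_index c = k)"
  obtain c where c: "c \<in> CB" "brick_index c = k"
    using LeastI_ex[of "\<lambda>k. \<exists>c\<in>CB. brick_index c = k"] \<open>CB \<noteq> {}\<close> unfolding k_def by blast
  have cB: "c \<in> ribbon_cells w" "ribbon_tile p w c \<in> B" using c CB_def by auto
  have k: "k \<ge> 1"
  proof (rule ccontr)
    assume "\<not> k \<ge> 1"
    hence "c = (0, 0) \<or> c = (1, 0) \<or> c = (0, 1)" using brick_index_0[OF cB(1)] c(2) by simp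
    thus False using cB(2) seed AB(2) seed_brick_in_A by auto
  qed
  show ?thesis
  proof (rule ribbon_cut_first_brick[OF AB(1,2) w cB c(2) k])
    fix c' assume c': "c' \<in> ribbon_cells w" "brick_index c' < k"
    hence "c' \<notin> CB" using not_less_Least unfolding k_def by blast
    thus "ribbon_tile p w c' \<in> A" using c' AB(1) unfolding CB_def ribbon_def by blast
  qed
qed

lemma ribbon_stable: "w \<noteq> [] \<Longrightarrow> stable_asm strength (ribbon p w)"
  unfolding stable_asm_def
proof (intro conjI allI impI)
  assume w: "w \<noteq> []"
  show "is_assembly (ribbon p w)" by (rule ribbon_assembly)
  fix A B assume h: "A \<union> B = ribbon p w \<and> A \<inter> B = {} \<and> A \<noteq> {} \<and> B \<noteq> {}"
  have "ribbon_tile p w (0, 0) \<in> ribbon p w" by (auto simp: ribbon_def ribbon_cells_def)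
  then consider "ribbon_tile p w (0, 0) \<in> A" | "ribbon_tile p w (0, 0) \<in> B" using h by blast
  then show "cut_weight strength A B \<ge> 1"
  proof cases
    case 1 thus ?thesis using ribbon_cut_from_seed h w by blast
  next
    case 2
    have "cut_weight strength B A \<ge> 1" using ribbon_cut_from_seed[of B A p w] h 2 w by blast
    thus ?thesis by (simp add: cut_weight_sym)
  qed
qed

definition end_cell :: "nat list \<Rightarrow> nat \<times> nat" where
  "end_cell w = (length w, if extends_top w then 0 else 1)"

definition end_dir :: "nat list \<Rightarrow> dir" where
  "end_dir w = (if extends_top w then North else South)"

definition end_glue :: "nat list \<Rightarrow> nat" where
  "end_glue w = (if extends_top w then glue_up (last w) else glue_down (last w))"

lemma ribbon_glue_west:
  "(x, y) \<in> ribbon_cells w \<Longrightarrow> tglue (ribbon_tile p w (x, y)) West = Some g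
     \<Longrightarrow> x \<noteq> 0 \<and> (x - 1, y) \<in> ribbon_cells w"
  by (auto simp: tglue_ribbon_tile tile_defs ribbon_cells_def split: if_splits)

lemma ribbon_glue_east:
  assumes w: "w \<noteq> []" and c: "(x, y) \<in> ribbon_cells w"
    and g: "tglue (ribbon_tile p w (x, y)) East = Some g" "g \<noteq> 0"
  shows "(x + 1, y) \<in> ribbon_cells w"
proof -
  obtain n where n: "length w = Suc n" using w by (cases w) auto
  have "(x = 0 \<and> y = 0) \<or> (y = 0 \<and> even x) \<or> (y = 1 \<and> odd x)"
    using g c by (auto simp: tglue_ribbon_tile tile_defs ribbon_cells_def split: if_splits)
  moreover have parity: "x + 1 \<le> j" if "x \<le> j" "odd x \<longleftrightarrow> even j" for j
    using that by (metis Suc_eq_plus1 le_neq_implies_less less_eq_Suc_le)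
  ultimately show ?thesis
    using c n parity[of n] parity[of "Suc n"] by (auto simp: ribbon_shape_defs split: if_splits)
qed

lemma ribbon_glue_north:
  assumes w: "w \<noteq> []" and c: "(x, y) \<in> ribbon_cells w"
    and g: "tglue (ribbon_tile p w (x, y)) North = Some g"
  shows "(x, y + 1) \<in> ribbon_cells w \<or> ((x, y) = end_cell w \<and> extends_top w \<and> g = glue_up (last w))"
proof (cases "(x, y + 1) \<in> ribbon_cells w")
  case free: False
  have y: "y = 0"
    using g c by (auto simp: tglue_ribbon_tile tile_defs ribbon_cells_def split: if_splits)
  hence x: "x = length w" and top: "extends_top w"
    using free c by (auto simp: ribbon_cells_def bottom_end_def top_end_def split: if_splits)
  have "odd (length w)" "last w = w ! (length w - 1)"
    using top w by (auto simp: extends_top_def last_conv_nth)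
  hence "g = glue_up (last w)"
    using g w by (simp add: x y tglue_ribbon_tile bottom_right_def tile_type_def)
  thus ?thesis using x y top by (simp add: end_cell_def)
qed simp

lemma ribbon_glue_south:
  assumes w: "w \<noteq> []" and c: "(x, y) \<in> ribbon_cells w"
    and g: "tglue (ribbon_tile p w (x, y)) South = Some g"
  shows "(y = 1 \<and> (x, 0) \<in> ribbon_cells w)
    \<or> ((x, y) = end_cell w \<and> \<not> extends_top w \<and> g = glue_down (last w))"
proof (cases "y = 1 \<and> (x, 0) \<in> ribbon_cells w")
  case free: False
  have y: "y = 1"
    using g c by (auto simp: tglue_ribbon_tile tile_defs ribbon_cells_def split: if_splits)
  hence x: "x = length w" and bottom: "\<not> extends_top w"
    using free c by (auto simp: ribbon_cells_def bottom_end_def top_end_def split: if_splits)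
  have "even (length w)" "last w = w ! (length w - 1)"
    using bottom w by (auto simp: extends_top_def last_conv_nth)
  hence "g = glue_down (last w)"
    using g w by (simp add: x y tglue_ribbon_tile top_right_def tile_type_def)
  thus ?thesis using x y bottom by (simp add: end_cell_def)
qed simp

lemma ribbon_free_glue:
  assumes w: "w \<noteq> []" and c: "c \<in> ribbon_cells w" and g: "tglue (ribbon_tile p w c) d = Some g"
    and free: "\<forall>c'\<in>ribbon_cells w. tpos (ribbon_tile p w c') \<noteq> neighbour (tpos (ribbon_tile p w c)) d"
  shows "(d = East \<and> g = 0) \<or> (c = end_cell w \<and> d = end_dir w \<and> g = end_glue w)"
proof -
  obtain x y where xy: "c = (x, y)" by (cases c)
  have free_cell: "c' \<notin> ribbon_cells w"
    if "tpos (ribbon_tile p w c') = neighbour (tpos (ribbon_tile p w c)) d" for c'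
    using free that by blast
  show ?thesis
  proof (cases d)
    case North
    thus ?thesis using ribbon_glue_north[OF w c[unfolded xy], of p g] g free_cell[of "(x, y + 1)"]
      by (auto simp: xy tpos_ribbon_tile end_dir_def end_glue_def)
  next
    case South
    thus ?thesis using ribbon_glue_south[OF w c[unfolded xy], of p g] g free_cell[of "(x, 0)"]
      by (auto simp: xy tpos_ribbon_tile end_dir_def end_glue_def)
  next
    case East
    thus ?thesis using ribbon_glue_east[OF w c[unfolded xy], of p g] g free_cell[of "(x + 1, y)"]
      by (auto simp: xy tpos_ribbon_tile)
  next
    case West
    thus ?thesis using ribbon_glue_west[OF c[unfolded xy], of p g] g free_cell[of "(x - 1, y)"]
      by (auto simp: xy tpos_ribbon_tile)
  qed
qed

lemma ribbon_bond:
  assumes w: "w \<noteq> []" and asm: "is_assembly (ribbon p w \<union> X)" "ribbon p w \<inter> X = {}"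
    and r: "r \<in> ribbon p w" and x: "x \<in> X" and nz: "edge_weight strength r x \<noteq> 0"
  obtains d g where "tglue r d = Some g" "tglue x (opposite d) = Some g" "tpos x = neighbour (tpos r) d"
    "edge_weight strength r x = strength g"
    "(d = East \<and> g = 0) \<or> (r = ribbon_tile p w (end_cell w) \<and> d = end_dir w \<and> g = end_glue w)"
proof -
  obtain c where c: "c \<in> ribbon_cells w" "r = ribbon_tile p w c" using r unfolding ribbon_def by blast
  from edge_weight_nonzero_neighbour[OF assembly_union_not_overlap[OF asm r x] nz] obtain d g where
    m: "tglue r d = Some g" "tglue x (opposite d) = Some g" "tpos x = neighbour (tpos r) d"
       "edge_weight strength r x = strength g" by blast
  have "tpos (ribbon_tile p w c') \<noteq> neighbour (tpos (ribbon_tile p w c)) d"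
    if "c' \<in> ribbon_cells w" for c'
  proof -
    have "ribbon_tile p w c' \<in> ribbon p w" using that by (simp add: ribbon_def)
    from assembly_union_tpos_neq[OF asm this x] show ?thesis using m(3) c(2) by simp
  qed
  hence "(d = East \<and> g = 0) \<or> (c = end_cell w \<and> d = end_dir w \<and> g = end_glue w)"
    using ribbon_free_glue[OF w c(1), of p d g] m(1) c(2) by blast
  with m c(2) show thesis by (intro that) auto
qed

text \<open>
  A bond between two ribbons would join exposed glues on opposite faces, but glue \<open>0\<close> is exposed
  only eastwards and \<open>glue_up\<close>, \<open>glue_down\<close> only northwards and southwards respectively.
\<close>

lemma cut_weight_ribbon_ribbon:
  assumes w1: "w1 \<noteq> []" and w2: "w2 \<noteq> []"
    and asm: "is_assembly (ribbon p1 w1 \<union> ribbon p2 w2)" "ribbon p1 w1 \<inter> ribbon p2 w2 = {}"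
  shows "cut_weight strength (ribbon p1 w1) (ribbon p2 w2) = 0"
  unfolding cut_weight_def
proof (intro sum.neutral ballI)
  fix a b assume a: "a \<in> ribbon p1 w1" and b: "b \<in> ribbon p2 w2"
  have asm': "is_assembly (ribbon p2 w2 \<union> ribbon p1 w1)" "ribbon p2 w2 \<inter> ribbon p1 w1 = {}"
    using asm by (simp_all add: Un_commute Int_commute)
  show "edge_weight strength a b = 0"
  proof (rule ccontr)
    assume nz: "edge_weight strength a b \<noteq> 0"
    obtain d g where ab: "tglue a d = Some g" "tglue b (opposite d) = Some g"
        "tpos b = neighbour (tpos a) d" "edge_weight strength a b = strength g"
        and A: "(d = East \<and> g = 0) \<or> (a = ribbon_tile p1 w1 (end_cell w1) \<and> d = end_dir w1 \<and> g = end_glue w1)"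
      by (rule ribbon_bond[OF w1 asm a b nz])
    have "edge_weight strength b a \<noteq> 0" using nz edge_weight_sym[of strength a b] by simp
    then obtain d' g' where ba: "tglue b d' = Some g'" "tglue a (opposite d') = Some g'"
        "tpos a = neighbour (tpos b) d'" "edge_weight strength b a = strength g'"
        and B: "(d' = East \<and> g' = 0) \<or> (b = ribbon_tile p2 w2 (end_cell w2) \<and> d' = end_dir w2 \<and> g' = end_glue w2)"
      by (rule ribbon_bond[OF w2 asm' b a])
    have "neighbour (tpos b) d' = neighbour (tpos b) (opposite d)"
      using ab(3) ba(3) neighbour_opposite[of "tpos a" d] by simp
    hence "d' = opposite d" by (rule neighbour_dir_inj)
    hence "g' = g" using ab(2) ba(1) by simp
    with \<open>d' = opposite d\<close> B
    have "(opposite d = East \<and> g = 0) \<or> (opposite d = end_dir w2 \<and> g = end_glue w2)" by auto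
    then show False using A
      by (cases d) (auto simp: end_dir_def end_glue_def split: if_splits)
  qed
qed

section \<open>Stability and interaction of bricks\<close>

lemma tpos_brick_left: "tpos (brick_left q upper a) = q"
  by (simp add: brick_left_def tpos_def)

lemma brick_assembly: "is_assembly (brick q upper a b)"
  by (auto simp: is_assembly_def brick_def brick_left_def brick_right_def overlap_def tpos_def)

lemma edge_weight_brick: "edge_weight strength (brick_left q upper a) (brick_right q upper b) = 1"
  by (cases q; cases upper) (simp_all add: edge_weight_def all_dirs_def glue_point_def brick_left_def
      brick_right_def tile_defs tglue_def tpos_def strength_def)

lemma two_element_partition:
  assumes "A \<union> B = {x, y}" "A \<inter> B = {}" "A \<noteq> {}" "B \<noteq> {}" "x \<noteq> y"
  shows "(A = {x} \<and> B = {y}) \<or> (A = {y} \<and> B = {x})"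
proof (cases "x \<in> A")
  case True
  hence "B \<subseteq> {y}" using assms(1,2) by auto
  hence B: "B = {y}" using assms(4) by auto
  hence "A = {x}" using assms(1,2) True by auto
  thus ?thesis using B by simp
next
  case False
  hence "A \<subseteq> {y}" using assms(1) by auto
  hence A: "A = {y}" using assms(3) by auto
  hence "B = {x}" using assms(1,2) False by auto
  thus ?thesis using A by simp
qed

lemma brick_stable: "stable_asm strength (brick q upper a b)"
  unfolding stable_asm_def
proof (intro conjI allI impI)
  show "is_assembly (brick q upper a b)" by (rule brick_assembly)
  fix A B assume h: "A \<union> B = brick q upper a b \<and> A \<inter> B = {} \<and> A \<noteq> {} \<and> B \<noteq> {}"
  let ?L = "brick_left q upper a" and ?R = "brick_right q upper b"
  from h have "(A = {?L} \<and> B = {?R}) \<or> (A = {?R} \<and> B = {?L})"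
    unfolding brick_def using brick_left_neq_right two_element_partition[of A B ?L ?R] by simp
  thus "cut_weight strength A B \<ge> 1"
    using edge_weight_brick[of q upper a b] edge_weight_sym[of strength ?L ?R]
    by (elim disjE) (simp_all add: cut_weight_def)
qed

lemma edge_weight_left_left:
  assumes "\<not> overlap (brick_left q1 u1 a1) (brick_left q2 u2 a2)"
  shows "edge_weight strength (brick_left q1 u1 a1) (brick_left q2 u2 a2) = 0"
proof (rule ccontr)
  assume "edge_weight strength (brick_left q1 u1 a1) (brick_left q2 u2 a2) \<noteq> 0"
  from edge_weight_nonzero_neighbour[OF assms this] obtain d g
    where "tglue (brick_left q1 u1 a1) d = Some g" "tglue (brick_left q2 u2 a2) (opposite d) = Some g"
    by blast
  thus False by (cases d; cases u1; cases u2) (auto simp: brick_left_def tile_defs tglue_def)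
qed

lemma edge_weight_right_right:
  assumes "\<not> overlap (brick_right q1 u1 b1) (brick_right q2 u2 b2)"
  shows "edge_weight strength (brick_right q1 u1 b1) (brick_right q2 u2 b2) = 0"
proof (rule ccontr)
  assume "edge_weight strength (brick_right q1 u1 b1) (brick_right q2 u2 b2) \<noteq> 0"
  from edge_weight_nonzero_neighbour[OF assms this] obtain d g
    where "tglue (brick_right q1 u1 b1) d = Some g" "tglue (brick_right q2 u2 b2) (opposite d) = Some g"
    by blast
  thus False by (cases d; cases u1; cases u2) (auto simp: brick_right_def tile_defs tglue_def)
qed

text \<open>
  A left tile meets a right tile of another brick by a half-strength glue only; the strength-1
  glue \<open>1\<close> cannot be used, since the partner position is taken by the left tile's own brick.
\<close>

lemma edge_weight_left_right:
  assumes "\<not> overlap (brick_left q1 u1 a1) (brick_right q2 u2 b2)"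
    "\<not> overlap (brick_right q1 u1 b1) (brick_right q2 u2 b2)"
    and nz: "edge_weight strength (brick_left q1 u1 a1) (brick_right q2 u2 b2) \<noteq> 0"
  shows "edge_weight strength (brick_left q1 u1 a1) (brick_right q2 u2 b2) = 1/2"
    "\<exists>d \<in> {West, North, South}. tpos (brick_right q2 u2 b2) = neighbour (tpos (brick_left q1 u1 a1)) d"
proof -
  from edge_weight_nonzero_neighbour[OF assms(1) nz] obtain d g where
    m: "tglue (brick_left q1 u1 a1) d = Some g" "tglue (brick_right q2 u2 b2) (opposite d) = Some g"
      "tpos (brick_right q2 u2 b2) = neighbour (tpos (brick_left q1 u1 a1)) d"
      "edge_weight strength (brick_left q1 u1 a1) (brick_right q2 u2 b2) = strength g"
    by blast
  have "d \<noteq> East"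
  proof
    assume "d = East"
    hence "tpos (brick_right q2 u2 b2) = tpos (brick_right q1 u1 b1)"
      using m(3) brick_right_pos[of q1 u1 b1 a1] by simp
    thus False using assms(2) by (simp add: overlap_def)
  qed
  thus "edge_weight strength (brick_left q1 u1 a1) (brick_right q2 u2 b2) = 1/2"
    using m by (cases d; cases u1; cases u2)
      (auto simp: brick_left_def brick_right_def tile_defs tglue_def strength_def)
  show "\<exists>d \<in> {West, North, South}. tpos (brick_right q2 u2 b2) = neighbour (tpos (brick_left q1 u1 a1)) d"
    using m(3) \<open>d \<noteq> East\<close> by (cases d) auto
qed

lemma cut_weight_brick_brick:
  assumes asm: "is_assembly (brick q1 u1 a1 b1 \<union> brick q2 u2 a2 b2)"
    "brick q1 u1 a1 b1 \<inter> brick q2 u2 a2 b2 = {}"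
  shows "cut_weight strength (brick q1 u1 a1 b1) (brick q2 u2 a2 b2) < 1"
proof -
  let ?L1 = "brick_left q1 u1 a1" and ?R1 = "brick_right q1 u1 b1"
  let ?L2 = "brick_left q2 u2 a2" and ?R2 = "brick_right q2 u2 b2"
  have no: "\<not> overlap ?L1 ?L2" "\<not> overlap ?L1 ?R2" "\<not> overlap ?R1 ?L2" "\<not> overlap ?R1 ?R2"
    using assembly_union_not_overlap[OF asm] by (auto simp: brick_def)
  have no': "\<not> overlap ?L2 ?R1" "\<not> overlap ?R2 ?R1"
    using no by (auto simp: overlap_def)
  have "cut_weight strength (brick q1 u1 a1 b1) (brick q2 u2 a2 b2) =
      edge_weight strength ?L1 ?L2 + edge_weight strength ?L1 ?R2
      + (edge_weight strength ?R1 ?L2 + edge_weight strength ?R1 ?R2)"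
    unfolding cut_weight_def brick_def using brick_left_neq_right by simp
  also have "\<dots> = edge_weight strength ?L1 ?R2 + edge_weight strength ?L2 ?R1"
    using edge_weight_left_left[OF no(1)] edge_weight_right_right[OF no(4)]
      edge_weight_sym[of strength ?R1 ?L2] by simp
  also have "\<dots> < 1"
  proof (cases "edge_weight strength ?L1 ?R2 = 0 \<or> edge_weight strength ?L2 ?R1 = 0")
    case True
    have "edge_weight strength ?L1 ?R2 \<le> 1/2" "edge_weight strength ?L2 ?R1 \<le> 1/2"
      using edge_weight_left_right(1)[OF no(2,4)] edge_weight_left_right(1)[OF no'] by fastforce+
    thus ?thesis using True by auto
  next
    case False
    obtain x y where xy: "tpos ?L1 = (x, y)" by (cases "tpos ?L1")
    have "tpos ?R1 = neighbour (tpos ?L1) East" "tpos ?R2 = neighbour (tpos ?L2) East"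
      by (rule brick_right_pos)+
    thus ?thesis
      using False edge_weight_left_right(2)[OF no(2,4)] edge_weight_left_right(2)[OF no'] xy
      by (cases "tpos ?L2") auto
  qed
  finally show ?thesis .
qed

lemma edge_weight_ribbon_brick_right:
  assumes w: "w \<noteq> []" and asm: "is_assembly (ribbon p w \<union> brick q upper a b)"
    "ribbon p w \<inter> brick q upper a b = {}" and r: "r \<in> ribbon p w"
  shows "edge_weight strength r (brick_right q upper b) = 0"
proof (rule ccontr)
  assume nz: "edge_weight strength r (brick_right q upper b) \<noteq> 0"
  obtain d g where "tglue (brick_right q upper b) (opposite d) = Some g"
      "(d = East \<and> g = 0) \<or> (r = ribbon_tile p w (end_cell w) \<and> d = end_dir w \<and> g = end_glue w)"
    by (rule ribbon_bond[OF w asm r _ nz]) (auto simp: brick_def)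
  thus False
    by (cases upper) (auto simp: brick_right_def end_dir_def end_glue_def tile_defs tglue_def split: if_splits)
qed

lemma edge_weight_ribbon_brick_left:
  assumes w: "w \<noteq> []" and asm: "is_assembly (ribbon p w \<union> brick q upper a b)"
    "ribbon p w \<inter> brick q upper a b = {}" and r: "r \<in> ribbon p w"
    and nz: "edge_weight strength r (brick_left q upper a) \<noteq> 0"
  shows "(edge_weight strength r (brick_left q upper a) = 1/2 \<and> q = neighbour (tpos r) East)
    \<or> (a = last w \<and> upper = extends_top w \<and> q = extension_pos p w)"
proof -
  obtain d g where m: "tglue (brick_left q upper a) (opposite d) = Some g"
      "tpos (brick_left q upper a) = neighbour (tpos r) d"
      "edge_weight strength r (brick_left q upper a) = strength g"
      and cases: "(d = East \<and> g = 0) \<or> (r = ribbon_tile p w (end_cell w) \<and> d = end_dir w \<and> g = end_glue w)"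
    by (rule ribbon_bond[OF w asm r _ nz]) (auto simp: brick_def)
  show ?thesis
  proof (cases "d = East \<and> g = 0")
    case True
    thus ?thesis using m by (simp add: tpos_brick_left strength_def)
  next
    case False
    hence end_bond: "r = ribbon_tile p w (end_cell w)" "d = end_dir w" "g = end_glue w"
      using cases by blast+
    have "a = last w \<and> upper = extends_top w"
      using m(1) end_bond(2,3)
      by (cases upper) (auto simp: brick_left_def end_dir_def end_glue_def tile_defs tglue_def split: if_splits)
    moreover have "q = extension_pos p w"
      using m(2) end_bond(1,2) by (auto simp: tpos_brick_left tpos_ribbon_tile end_cell_def end_dir_def
          extension_pos_def)
    ultimately show ?thesis by blast
  qed
qed

lemma sum_le_half_unique:
  assumes fin: "finite R" and h: "\<And>r. r \<in> R \<Longrightarrow> f r \<noteq> 0 \<Longrightarrow> f r = 1/2 \<and> P r"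
    and uniq: "\<And>r1 r2. r1 \<in> R \<Longrightarrow> r2 \<in> R \<Longrightarrow> P r1 \<Longrightarrow> P r2 \<Longrightarrow> r1 = r2"
  shows "(\<Sum>r\<in>R. f r) \<le> (1/2 :: rat)"
proof (cases "\<exists>r\<in>R. f r \<noteq> 0")
  case False thus ?thesis by simp
next
  case True
  then obtain r0 where r0: "r0 \<in> R" "f r0 \<noteq> 0" by blast
  have "(\<Sum>r\<in>R. f r) = (\<Sum>r\<in>{r0}. f r)"
  proof (rule sum.mono_neutral_right[OF fin])
    show "{r0} \<subseteq> R" using r0 by simp
    show "\<forall>i\<in>R - {r0}. f i = 0" using h uniq r0 by blast
  qed
  thus ?thesis using h r0 by simp
qed

text \<open>
  Unless a brick sits at the extension position, at most one ribbon tile (its west neighbour)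
  bonds to it, with strength 1/2.
\<close>

lemma ribbon_brick_attach:
  assumes w: "w \<noteq> []" and asm: "is_assembly (ribbon p w \<union> brick q upper a b)"
    "ribbon p w \<inter> brick q upper a b = {}"
    and cut: "cut_weight strength (ribbon p w) (brick q upper a b) \<ge> 1"
  shows "a = last w \<and> upper = extends_top w \<and> q = extension_pos p w"
proof (rule ccontr)
  assume elsewhere: "\<not> (a = last w \<and> upper = extends_top w \<and> q = extension_pos p w)"
  let ?L = "brick_left q upper a" and ?R = "brick_right q upper b"
  have "cut_weight strength (ribbon p w) (brick q upper a b)
      = (\<Sum>r\<in>ribbon p w. edge_weight strength r ?L + edge_weight strength r ?R)"
    unfolding cut_weight_def brick_def using brick_left_neq_right by simp
  also have "\<dots> = (\<Sum>r\<in>ribbon p w. edge_weight strength r ?L)"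
    using edge_weight_ribbon_brick_right[OF w asm] by simp
  also have "\<dots> \<le> 1/2"
  proof (rule sum_le_half_unique[OF finite_ribbon, where P = "\<lambda>r. q = neighbour (tpos r) East"])
    show "\<And>r. r \<in> ribbon p w \<Longrightarrow> edge_weight strength r ?L \<noteq> 0
        \<Longrightarrow> edge_weight strength r ?L = 1/2 \<and> q = neighbour (tpos r) East"
      using edge_weight_ribbon_brick_left[OF w asm] elsewhere by blast
    fix r1 r2 assume "r1 \<in> ribbon p w" "r2 \<in> ribbon p w"
      "q = neighbour (tpos r1) East" "q = neighbour (tpos r2) East"
    thus "r1 = r2"
      using neighbour_pos_inj ribbon_assembly[of p w] unfolding is_assembly_def overlap_def by fastforce
  qed
  finally show False using cut by simp
qed

lemma combinable_ribbon_extension: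
  assumes w: "w \<noteq> []"
  shows "combinable strength (ribbon p w) (brick (0, 0) (extends_top w) (last w) u) (ribbon p (w @ [u]))"
proof -
  define k where "k = length w"
  define r :: nat where "r = (if odd k then 1 else 0)"
  have k: "k \<ge> 1" using w by (cases w) (simp_all add: k_def)
  let ?X = "brick (extension_pos p w) (extends_top w) (last w) u"
  let ?L = "brick_left (extension_pos p w) (extends_top w) (last w)"
  have "last w = (w @ [u]) ! (k - 1)" using w by (simp add: k_def last_conv_nth nth_append)
  hence L: "?L = ribbon_tile p (w @ [u]) (k, r)"
    using k by (auto simp: brick_left_def ribbon_tile_def extension_pos_def extends_top_def k_def r_def)
  have cells: "(k - 1, r) \<in> ribbon_cells w" "(k, 1 - r) \<in> ribbon_cells w"
    using k by (auto simp: ribbon_shape_defs k_def r_def)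
  hence same: "ribbon_tile p (w @ [u]) (k - 1, r) = ribbon_tile p w (k - 1, r)"
    "ribbon_tile p (w @ [u]) (k, 1 - r) = ribbon_tile p w (k, 1 - r)"
    by (simp_all add: ribbon_tile_def ribbon_type_snoc del: ribbon_type.simps)
  have mem: "ribbon_tile p w (k - 1, r) \<in> ribbon p w" "ribbon_tile p w (k, 1 - r) \<in> ribbon p w"
    "?L \<in> ?X"
    using cells by (simp_all add: ribbon_def brick_def)
  have "ribbon_tile p w (k - 1, r) \<noteq> ribbon_tile p w (k, 1 - r)"
    by (simp add: ribbon_tile_def)
  from edge_weight_pair_le_cut_weight[of strength, OF strength_nonneg finite_ribbon _ mem(1,2) this mem(3)]
  have "edge_weight strength (ribbon_tile p w (k - 1, r)) ?L
      + edge_weight strength (ribbon_tile p w (k, 1 - r)) ?L \<le> cut_weight strength (ribbon p w) ?X"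
    using brick_assembly unfolding is_assembly_def by blast
  moreover have "edge_weight strength (ribbon_tile p w (k - 1, r)) ?L = 1/2"
    "edge_weight strength (ribbon_tile p w (k, 1 - r)) ?L = 1/2"
    using edge_weight_brick_west[OF k r_def, of p "w @ [u]"]
      edge_weight_brick_vertical[OF k r_def, of p "w @ [u]"] L same by simp_all
  ultimately have "cut_weight strength (ribbon p w) ?X \<ge> 1" by simp
  moreover have "translate (extension_pos p w) (brick (0, 0) (extends_top w) (last w) u) = ?X"
    by (simp add: translate_brick pos_add_def)
  ultimately show ?thesis
    unfolding combinable_def Let_def
    using ribbon_assembly brick_assembly ribbon_extension_disjoint[OF w] ribbon_snoc[OF w]
    by (intro conjI exI[of _ "extension_pos p w"]) (auto simp flip: ribbon_snoc[OF w])
qed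

lemma ribbon_label_seed: "tlabel (ribbon_tile p w c) = Some ''l'' \<Longrightarrow> c = (0, 0)"
  by (cases c) (auto simp: tlabel_def ribbon_tile_def tile_defs split: if_splits)

lemma ribbon_seed: "ribbon_tile p w (0, 0) \<in> ribbon p w" "tlabel (ribbon_tile p w (0, 0)) = Some ''l''"
  unfolding ribbon_def by (rule imageI) (auto simp: ribbon_cells_def tlabel_def ribbon_tile_def tile_defs)

lemma ribbon_labelled: "\<exists>t\<in>ribbon p w. tlabel t = Some ''l''"
  using ribbon_seed by blast

text \<open>The labelled seed fixes the position of a ribbon, its size the length of the walk, and the
  glue exposed by its last tile the last vertex.\<close>

lemma ribbon_eq_last:
  assumes w: "w \<noteq> []" and w': "w' \<noteq> []" and eq: "ribbon p w = ribbon q w'"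
  shows "last w = last w'"
proof -
  obtain c where c: "c \<in> ribbon_cells w'" "ribbon_tile p w (0, 0) = ribbon_tile q w' c"
    using eq ribbon_seed(1)[of p w] unfolding ribbon_def by auto
  hence "c = (0, 0)" using ribbon_seed(2)[of p w] ribbon_label_seed by metis
  hence pq: "p = q" using c(2) by (simp add: ribbon_tile_def prod_eq_iff)
  have len: "length w = length w'"
    using card_ribbon[OF w, of p] card_ribbon[OF w', of q] eq by simp
  have "end_cell w \<in> ribbon_cells w"
    using w by (auto simp: end_cell_def ribbon_shape_defs)
  then obtain c' where c': "c' \<in> ribbon_cells w'" "ribbon_tile p w (end_cell w) = ribbon_tile q w' c'"
    using eq unfolding ribbon_def by blast
  hence "c' = end_cell w" using pq by (cases c') (auto simp: ribbon_tile_def end_cell_def)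
  hence "ribbon_type w (end_cell w) = ribbon_type w' (end_cell w)" using c' by (simp add: ribbon_tile_def)
  hence "fst (ribbon_type w (end_cell w)) North = fst (ribbon_type w' (end_cell w)) North"
    "fst (ribbon_type w (end_cell w)) South = fst (ribbon_type w' (end_cell w)) South" by simp_all
  hence "w ! (length w - 1) = w' ! (length w - 1)"
    using w len by (auto simp: end_cell_def extends_top_def tile_defs split: if_splits)
  thus ?thesis using len w w' by (simp add: last_conv_nth)
qed

section \<open>Walks and assembly sequences\<close>

lemma is_walk_start: "is_walk E s [s]"
  by (simp add: is_walk_def)

lemma is_walk_nonempty: "is_walk E s w \<Longrightarrow> w \<noteq> []"
  by (simp add: is_walk_def)

lemma is_walk_snoc: "is_walk E s w \<Longrightarrow> (last w, v) \<in> E \<Longrightarrow> is_walk E s (w @ [v])"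
  unfolding is_walk_def
proof (intro conjI allI impI)
  assume h: "w \<noteq> [] \<and> hd w = s \<and> (\<forall>i. Suc i < length w \<longrightarrow> (w ! i, w ! Suc i) \<in> E)" "(last w, v) \<in> E"
  show "w @ [v] \<noteq> []" "hd (w @ [v]) = s" using h by simp_all
  fix i assume i: "Suc i < length (w @ [v])"
  show "((w @ [v]) ! i, (w @ [v]) ! Suc i) \<in> E"
  proof (cases "Suc i < length w")
    case True thus ?thesis using h by (simp add: nth_append)
  next
    case False
    hence "i = length w - 1" "Suc i = length w" using i by simp_all
    thus ?thesis using h by (simp add: nth_append last_conv_nth)
  qed
qed

lemma is_walk_take: "is_walk E s w \<Longrightarrow> is_walk E s (take (Suc i) w)"
  unfolding is_walk_def by auto

lemma is_walk_last_in: "E \<subseteq> V \<times> V \<Longrightarrow> s \<in> V \<Longrightarrow> is_walk E s w \<Longrightarrow> last w \<in> V"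
proof -
  assume EV: "E \<subseteq> V \<times> V" and sV: "s \<in> V" and w: "is_walk E s w"
  show ?thesis
  proof (cases "length w = 1")
    case True thus ?thesis using w sV by (cases w) (auto simp: is_walk_def)
  next
    case False
    then obtain n where n: "length w = Suc (Suc n)"
      using w by (cases w; cases "tl w") (auto simp: is_walk_def)
    hence "(w ! n, w ! Suc n) \<in> E" using w by (auto simp: is_walk_def)
    thus ?thesis using EV n w by (auto simp: last_conv_nth is_walk_nonempty)
  qed
qed

lemma last_take_Suc: "i < length w \<Longrightarrow> last (take (Suc i) w) = w ! i"
  by (simp add: take_Suc_conv_app_nth)

lemma fprime_eqI:
  "length S = length W \<Longrightarrow> (\<And>i. i < length S \<Longrightarrow> f (S ! i) = Some (W ! i)) \<Longrightarrow> fprime f S = W"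
proof (induction S arbitrary: W)
  case Nil thus ?case by (simp add: fprime_def)
next
  case (Cons x xs)
  then obtain y ys where W: "W = y # ys" by (cases W) auto
  have "f x = Some y" using Cons.prems(2)[of 0] W by simp
  moreover have "fprime f xs = ys" using Cons.IH[of ys] Cons.prems W by force
  ultimately show ?case using W by (simp add: fprime_def)
qed

lemma length_fprime: "(\<And>x. x \<in> set S \<Longrightarrow> f x \<noteq> None) \<Longrightarrow> length (fprime f S) = length S"
  by (induction S) (auto simp: fprime_def split: option.splits)

definition ribbon_seq :: "nat list \<Rightarrow> nat assembly list" where
  "ribbon_seq w = map (\<lambda>i. ribbon (0, 0) (take (Suc i) w)) [0..<length w]"

lemma length_ribbon_seq [simp]: "length (ribbon_seq w) = length w"
  by (simp add: ribbon_seq_def)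

lemma nth_ribbon_seq [simp]: "i < length w \<Longrightarrow> ribbon_seq w ! i = ribbon (0, 0) (take (Suc i) w)"
  by (simp add: ribbon_seq_def)

lemma ribbon_seq_snoc: "ribbon_seq (w @ [v]) = ribbon_seq w @ [ribbon (0, 0) (w @ [v])]"
  by (rule nth_equalityI) (auto simp: nth_append)

lemma fuel_ribbon_seq: "fuel (ribbon_seq w) = 2 * (length w - 1)"
proof -
  have "fuel_step (ribbon_seq w ! i) (ribbon_seq w ! Suc i) = 2" if "i < length w - 1" for i
    using that card_ribbon[of "take (Suc i) w" "(0, 0)"] card_ribbon[of "take (Suc (Suc i)) w" "(0, 0)"]
    by (cases w) (auto simp: fuel_step_def)
  thus ?thesis unfolding fuel_def by simp
qed

section \<open>Producible assemblies\<close>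

locale start_graph =
  fixes V :: "nat set" and E :: "(nat \<times> nat) set" and s :: nat
  assumes finite_V: "finite V" and E_sub: "E \<subseteq> V \<times> V" and start_in: "s \<in> V"
begin

definition edge_bricks :: "nat assembly set" where
  "edge_bricks = (\<lambda>(upper, a, b). brick (0, 0) upper a b) ` (UNIV \<times> E)"

definition initial_set :: "nat assembly set" where
  "initial_set = insert (ribbon (0, 0) [s]) edge_bricks"

definition walk_assemblies :: "nat assembly set" where
  "walk_assemblies = {ribbon p w | p w. is_walk E s w} \<union> edge_bricks"

lemma edge_bricks_iff: "X \<in> edge_bricks \<longleftrightarrow> (\<exists>upper a b. (a, b) \<in> E \<and> X = brick (0, 0) upper a b)"
  unfolding edge_bricks_def by force

lemma walk_assembliesE:
  assumes "X \<in> walk_assemblies"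
  obtains (ribbon) p w where "is_walk E s w" "X = ribbon p w"
    | (brick) upper a b where "(a, b) \<in> E" "X = brick (0, 0) upper a b"
proof -
  from assms have "(\<exists>p w. is_walk E s w \<and> X = ribbon p w) \<or> X \<in> edge_bricks"
    unfolding walk_assemblies_def by blast
  thus thesis using that edge_bricks_iff by metis
qed

lemma walk_assemblies_stable: "X \<in> walk_assemblies \<Longrightarrow> stable_asm strength X"
  by (cases rule: walk_assembliesE) (auto intro: ribbon_stable brick_stable dest: is_walk_nonempty)

lemma combinable_ribbon:
  assumes w: "is_walk E s w" and B: "B \<in> walk_assemblies" and comb: "combinable strength (ribbon p w) B C"
  obtains v where "(last w, v) \<in> E" "C = ribbon p (w @ [v])"
proof -
  from comb obtain t where t: "ribbon p w \<inter> translate t B = {}" "C = ribbon p w \<union> translate t B"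
    "is_assembly C" "cut_weight strength (ribbon p w) (translate t B) \<ge> 1"
    unfolding combinable_def Let_def by blast
  have w_ne: "w \<noteq> []" using is_walk_nonempty[OF w] .
  from B show thesis
  proof (cases rule: walk_assembliesE)
    case (ribbon p' w')
    hence "translate t B = ribbon (pos_add p' t) w'" by (simp add: translate_ribbon)
    hence "cut_weight strength (ribbon p w) (translate t B) = 0"
      using cut_weight_ribbon_ribbon[OF w_ne is_walk_nonempty[OF ribbon(1)]] t by simp
    thus thesis using t(4) by simp
  next
    case (brick upper a b)
    hence tB: "translate t B = brick t upper a b" by (simp add: translate_brick pos_add_def)
    hence "a = last w \<and> upper = extends_top w \<and> t = extension_pos p w"
      using ribbon_brick_attach[OF w_ne] t by simp
    hence "C = ribbon p (w @ [b])" using t(2) tB ribbon_snoc[OF w_ne] by simp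
    thus thesis using that brick(1) \<open>a = last w \<and> _\<close> by blast
  qed
qed

lemma combinable_edge_brick:
  assumes A: "A \<in> edge_bricks" and B: "B \<in> walk_assemblies" and comb: "combinable strength A B C"
  shows "C \<in> walk_assemblies"
proof -
  from comb obtain t where t: "A \<inter> translate t B = {}" "C = A \<union> translate t B"
    "is_assembly C" "cut_weight strength A (translate t B) \<ge> 1"
    unfolding combinable_def Let_def by blast
  from A obtain upper a b where ab: "(a, b) \<in> E" "A = brick (0, 0) upper a b"
    unfolding edge_bricks_iff by blast
  from B show ?thesis
  proof (cases rule: walk_assembliesE)
    case (ribbon p w)
    let ?q = "pos_add p t"
    have w_ne: "w \<noteq> []" using is_walk_nonempty[OF ribbon(1)] .
    have tB: "translate t B = ribbon ?q w" using ribbon by (simp add: translate_ribbon)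
    have "cut_weight strength (ribbon ?q w) A \<ge> 1"
      using t(4) tB cut_weight_sym[of strength A] by simp
    hence attach: "a = last w \<and> upper = extends_top w \<and> (0, 0) = extension_pos ?q w"
      using ribbon_brick_attach[OF w_ne, of ?q "(0, 0)" upper a b] t tB ab(2) by (simp add: Un_commute Int_commute)
    hence "C = ribbon ?q (w @ [b])" using t(2) tB ab(2) ribbon_snoc[OF w_ne, of ?q b] by auto
    moreover have "is_walk E s (w @ [b])" using is_walk_snoc[OF ribbon(1)] ab(1) attach by simp
    ultimately show ?thesis unfolding walk_assemblies_def by blast
  next
    case (brick upper' a' b')
    have "translate t B = brick t upper' a' b'" using brick by (simp add: translate_brick pos_add_def)
    thus ?thesis using cut_weight_brick_brick[of "(0, 0)" upper a b t upper' a' b'] t ab(2) by simp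
  qed
qed

lemma walk_assemblies_combinable:
  assumes A: "A \<in> walk_assemblies" and B: "B \<in> walk_assemblies" and comb: "combinable strength A B C"
  shows "C \<in> walk_assemblies"
  using A
proof (cases rule: walk_assembliesE)
  case (ribbon p w)
  then obtain v where "(last w, v) \<in> E" "C = ribbon p (w @ [v])"
    using combinable_ribbon B comb by metis
  thus ?thesis using is_walk_snoc[OF ribbon(1)] unfolding walk_assemblies_def by blast
next
  case brick
  hence "A \<in> edge_bricks" unfolding edge_bricks_iff by blast
  thus ?thesis using combinable_edge_brick B comb by blast
qed

lemma producible_walk_assemblies: "X \<in> producible strength initial_set \<Longrightarrow> X \<in> walk_assemblies"
proof (induction rule: producible.induct)
  case (init a)
  thus ?case using is_walk_start[of E s] unfolding initial_set_def walk_assemblies_def by blast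
next
  case (comb A B C)
  thus ?case using walk_assemblies_combinable by blast
next
  case (brk1 C A B)
  thus ?case using stable_not_breakable walk_assemblies_stable by blast
next
  case (brk2 C A B)
  thus ?case using stable_not_breakable walk_assemblies_stable by blast
qed

text \<open>By \<open>ribbon_eq_last\<close> the choice of the walk does not matter.\<close>

definition ribbon_end :: "nat assembly \<Rightarrow> nat option" where
  "ribbon_end X = (if X \<in> producible strength initial_set \<and> (\<exists>p w. is_walk E s w \<and> X = ribbon p w)
     then Some (last (SOME w. \<exists>p. is_walk E s w \<and> X = ribbon p w)) else None)"

lemma ribbon_end_ribbon:
  assumes "ribbon p w \<in> producible strength initial_set" "is_walk E s w"
  shows "ribbon_end (ribbon p w) = Some (last w)"
proof -
  define w0 where "w0 = (SOME w'. \<exists>p'. is_walk E s w' \<and> ribbon p w = ribbon p' w')"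
  have "\<exists>p'. is_walk E s w0 \<and> ribbon p w = ribbon p' w0"
    unfolding w0_def by (rule someI_ex) (use assms(2) in blast)
  then obtain p' where "is_walk E s w0" "ribbon p w = ribbon p' w0" by blast
  hence "last w = last w0" using ribbon_eq_last is_walk_nonempty assms(2) by metis
  moreover have "ribbon p w \<in> producible strength initial_set
      \<and> (\<exists>p' w'. is_walk E s w' \<and> ribbon p w = ribbon p' w')"
    using assms by blast
  ultimately show ?thesis by (simp only: ribbon_end_def w0_def if_P)
qed

lemma ribbon_end_Some: "ribbon_end X = Some v \<Longrightarrow> X \<in> producible strength initial_set \<and> v \<in> V"
proof -
  assume h: "ribbon_end X = Some v"
  hence X: "X \<in> producible strength initial_set \<and> (\<exists>p w. is_walk E s w \<and> X = ribbon p w)"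
    unfolding ribbon_end_def by (auto split: if_splits)
  hence "\<exists>w p. is_walk E s w \<and> X = ribbon p w" by blast
  from someI_ex[OF this] have "last (SOME w. \<exists>p. is_walk E s w \<and> X = ribbon p w) \<in> V"
    using is_walk_last_in[OF E_sub start_in] by blast
  moreover have "v = last (SOME w. \<exists>p. is_walk E s w \<and> X = ribbon p w)"
    using h by (simp only: ribbon_end_def if_P[OF X] option.inject)
  ultimately show ?thesis using X by simp
qed

lemma labelled_producible:
  assumes "X \<in> producible strength initial_set" "\<exists>t\<in>X. tlabel t = Some ''l''"
  obtains p w where "is_walk E s w" "X = ribbon p w"
  using producible_walk_assemblies[OF assms(1)]
proof (cases rule: walk_assembliesE)
  case brick thus thesis using assms(2) brick_unlabelled by force
qed

lemma labelled_initial: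
  assumes "X \<in> initial_set" "\<exists>t\<in>X. tlabel t = Some ''l''"
  shows "X = ribbon (0, 0) [s]"
proof -
  have "X \<notin> edge_bricks" using assms(2) brick_unlabelled unfolding edge_bricks_iff by fastforce
  thus ?thesis using assms(1) unfolding initial_set_def by blast
qed

lemma edge_brick_producible: "(a, b) \<in> E \<Longrightarrow> brick (0, 0) upper a b \<in> producible strength initial_set"
  by (rule producible.init) (auto simp: initial_set_def edge_bricks_iff)

lemma ribbon_seq_steps:
  assumes W: "is_walk E s W" and i: "Suc i < length W"
  shows "combinable strength (ribbon_seq W ! i) (brick (0, 0) (extends_top (take (Suc i) W)) (W ! i) (W ! Suc i))
      (ribbon_seq W ! Suc i)"
proof -
  have "take (Suc (Suc i)) W = take (Suc i) W @ [W ! Suc i]" using i by (simp add: take_Suc_conv_app_nth)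
  moreover have "last (take (Suc i) W) = W ! i" using i by (simp add: last_take_Suc)
  ultimately show ?thesis
    using combinable_ribbon_extension[of "take (Suc i) W" "(0, 0)" "W ! Suc i"] i is_walk_nonempty[OF W]
    by simp
qed

lemma ribbon_seq_producible:
  assumes W: "is_walk E s W"
  shows "set (ribbon_seq W) \<subseteq> producible strength initial_set"
proof -
  have "ribbon_seq W ! i \<in> producible strength initial_set" if "i < length W" for i
    using that
  proof (induction i)
    case 0
    have "take (Suc 0) W = [s]" using W by (cases W) (auto simp: is_walk_def)
    thus ?case using 0 producible.init[of "ribbon (0, 0) [s]"] by (simp add: initial_set_def)
  next
    case (Suc i)
    have "(W ! i, W ! Suc i) \<in> E" using W Suc.prems by (simp add: is_walk_def)
    from producible.comb[OF Suc.IH edge_brick_producible[OF this] ribbon_seq_steps[OF W Suc.prems]]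
    show ?case using Suc.prems by simp
  qed
  thus ?thesis by (auto simp: in_set_conv_nth)
qed

lemma ribbon_seq_valid:
  assumes W: "is_walk E s W"
  shows "valid_seq strength initial_set (ribbon_seq W)" "nascent initial_set (ribbon_seq W)"
    "focused ''l'' (ribbon_seq W)"
proof -
  have W_ne: "W \<noteq> []" and hd: "hd W = s" using W by (auto simp: is_walk_def)
  show "valid_seq strength initial_set (ribbon_seq W)"
    unfolding valid_seq_def
  proof (intro conjI allI impI)
    show "ribbon_seq W \<noteq> []" using W_ne by (simp add: ribbon_seq_def)
    show "set (ribbon_seq W) \<subseteq> producible strength initial_set" by (rule ribbon_seq_producible[OF W])
    fix i assume "Suc i < length (ribbon_seq W)"
    hence i: "Suc i < length W" by simp
    hence "(W ! i, W ! Suc i) \<in> E" using W by (simp add: is_walk_def)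
    thus "(\<exists>b\<in>producible strength initial_set. combinable strength (ribbon_seq W ! i) b (ribbon_seq W ! Suc i))
        \<or> (\<exists>b. breakable strength (ribbon_seq W ! i) (ribbon_seq W ! Suc i) b)"
      using ribbon_seq_steps[OF W i] edge_brick_producible by blast
  qed
  have "take (Suc 0) W = [s]" using W_ne hd by (cases W) auto
  moreover have ne: "ribbon_seq W \<noteq> []" using W_ne by (simp add: ribbon_seq_def)
  ultimately have "hd (ribbon_seq W) = ribbon (0, 0) [s]" using W_ne by (simp add: hd_conv_nth)
  thus "nascent initial_set (ribbon_seq W)" using ne by (simp add: nascent_def initial_set_def)
  show "focused ''l'' (ribbon_seq W)"
    unfolding focused_def ribbon_seq_def using ribbon_labelled by auto
qed

lemma fprime_ribbon_seq:
  assumes W: "is_walk E s W"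
  shows "fprime ribbon_end (ribbon_seq W) = W"
proof (rule fprime_eqI)
  fix i assume i: "i < length (ribbon_seq W)"
  hence "ribbon_seq W ! i \<in> producible strength initial_set"
    using ribbon_seq_producible[OF W] nth_mem by blast
  thus "ribbon_end (ribbon_seq W ! i) = Some (W ! i)"
    using ribbon_end_ribbon is_walk_take[OF W, of i] i by (simp add: last_take_Suc)
qed simp

lemma valid_seq_ribbon_step:
  assumes valid: "valid_seq strength initial_set S" and W: "is_walk E s W"
    and Si: "S ! i = ribbon (0, 0) W" and i: "Suc i < length S"
  obtains v where "(last W, v) \<in> E" "S ! Suc i = ribbon (0, 0) (W @ [v])"
proof -
  have "S ! i \<in> producible strength initial_set" using valid i unfolding valid_seq_def by auto
  hence "\<not> breakable strength (S ! i) (S ! Suc i) b" for b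
    using stable_not_breakable walk_assemblies_stable producible_walk_assemblies by blast
  then obtain b where "b \<in> producible strength initial_set" "combinable strength (S ! i) b (S ! Suc i)"
    using valid i unfolding valid_seq_def by blast
  thus thesis using combinable_ribbon[OF W] producible_walk_assemblies Si that by metis
qed

lemma focused_nascent_seq_ribbon_seq:
  assumes valid: "valid_seq strength initial_set S" and focused: "focused ''l'' S"
    and nascent: "nascent initial_set S"
  obtains W where "is_walk E s W" "S = ribbon_seq W"
proof -
  have "\<exists>W. is_walk E s W \<and> take (Suc n) S = ribbon_seq W" if "n < length S" for n
    using that
  proof (induction n)
    case 0
    have "S ! 0 \<in> initial_set" "\<exists>t\<in>S ! 0. tlabel t = Some ''l''"
      using nascent focused 0 by (auto simp: nascent_def focused_def hd_conv_nth)
    hence "S ! 0 = ribbon (0, 0) [s]" by (rule labelled_initial)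
    thus ?case using 0 is_walk_start[of E s]
      by (intro exI[of _ "[s]"]) (simp add: take_Suc_conv_app_nth ribbon_seq_def)
  next
    case (Suc n)
    then obtain W where W: "is_walk E s W" "take (Suc n) S = ribbon_seq W" by auto
    have "length W = Suc n" using W(2) Suc.prems by (metis length_ribbon_seq length_take min_absorb2 Suc_leD less_eq_Suc_le)
    hence "S ! n = ribbon (0, 0) W" using W(2) Suc.prems by (metis lessI nth_ribbon_seq nth_take take_all order_refl)
    then obtain v where v: "(last W, v) \<in> E" "S ! Suc n = ribbon (0, 0) (W @ [v])"
      using valid_seq_ribbon_step[OF valid W(1) _ Suc.prems] by blast
    have "take (Suc (Suc n)) S = ribbon_seq (W @ [v])"
      using W(2) v(2) Suc.prems by (simp add: take_Suc_conv_app_nth ribbon_seq_snoc)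
    thus ?case using is_walk_snoc[OF W(1) v(1)] by blast
  qed
  moreover have "S \<noteq> []" using nascent by (simp add: nascent_def)
  ultimately show thesis using that by (metis Suc_pred length_greater_0_conv lessI take_all order_refl)
qed

lemma focused_seq_single_vertex:
  assumes focused: "focused ''l'' S" and valid: "valid_seq strength initial_set S"
    and fS: "fprime ribbon_end S = [u]"
  obtains p w where "S = [ribbon p w]" "is_walk E s w" "last w = u"
    "ribbon p w \<in> producible strength initial_set"
proof -
  have prod: "set S \<subseteq> producible strength initial_set" using valid unfolding valid_seq_def by auto
  have ribbon: "\<exists>p w. is_walk E s w \<and> X = ribbon p w" if X: "X \<in> set S" for X
  proof -
    have "X \<in> producible strength initial_set" "\<exists>t\<in>X. tlabel t = Some ''l''"
      using prod focused X unfolding focused_def by auto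
    thus ?thesis by (rule labelled_producible) blast
  qed
  have "ribbon_end X \<noteq> None" if X: "X \<in> set S" for X
  proof -
    obtain p w where pw: "is_walk E s w" "X = ribbon p w" using ribbon[OF X] by blast
    have "ribbon p w \<in> producible strength initial_set" using prod X pw(2) by auto
    thus ?thesis using ribbon_end_ribbon[OF _ pw(1)] pw(2) by simp
  qed
  hence "length S = 1" using length_fprime[of S ribbon_end] fS by simp
  then obtain X where S: "S = [X]" by (cases S) auto
  obtain p w where w: "is_walk E s w" "X = ribbon p w" using ribbon S by auto
  have X_prod: "X \<in> producible strength initial_set" using prod S by simp
  have "ribbon_end X = Some u" using fS S by (simp add: fprime_def split: option.splits)
  hence "last w = u" using ribbon_end_ribbon X_prod w by simp
  thus thesis using that S w X_prod by blast
qed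

lemma edge_extends:
  assumes uv: "(u, v) \<in> E" and focused: "focused ''l'' S" and valid: "valid_seq strength initial_set S"
    and fS: "fprime ribbon_end S = [u]"
  shows "\<exists>R. focused ''l'' (S @ R) \<and> valid_seq strength initial_set (S @ R) \<and> fprime ribbon_end (S @ R) = [u, v]"
proof -
  obtain p w where S: "S = [ribbon p w]" and w: "is_walk E s w" "last w = u"
    and X_prod: "ribbon p w \<in> producible strength initial_set"
    using focused_seq_single_vertex[OF focused valid fS] by blast
  let ?b = "brick (0, 0) (extends_top w) (last w) v" and ?X' = "ribbon p (w @ [v])"
  have b_prod: "?b \<in> producible strength initial_set" using edge_brick_producible uv w(2) by simp
  have comb: "combinable strength (ribbon p w) ?b ?X'"
    using combinable_ribbon_extension[OF is_walk_nonempty[OF w(1)]] by simp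
  have X'_prod: "?X' \<in> producible strength initial_set" by (rule producible.comb[OF X_prod b_prod comb])
  have "focused ''l'' (S @ [?X'])" using S ribbon_labelled unfolding focused_def by auto
  moreover have "valid_seq strength initial_set (S @ [?X'])"
    unfolding valid_seq_def
  proof (intro conjI allI impI)
    show "S @ [?X'] \<noteq> []" "set (S @ [?X']) \<subseteq> producible strength initial_set"
      using X_prod X'_prod S by simp_all
    fix i assume "Suc i < length (S @ [?X'])"
    hence "i = 0" using S by simp
    thus "(\<exists>b\<in>producible strength initial_set. combinable strength ((S @ [?X']) ! i) b ((S @ [?X']) ! Suc i))
        \<or> (\<exists>b. breakable strength ((S @ [?X']) ! i) ((S @ [?X']) ! Suc i) b)"
      using b_prod comb S by auto
  qed
  moreover have "fprime ribbon_end (S @ [?X']) = [u, v]"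
    using ribbon_end_ribbon[OF X_prod w(1)] ribbon_end_ribbon[OF X'_prod is_walk_snoc[OF w(1)]] uv w(2) S
    by (simp add: fprime_def)
  ultimately show ?thesis by blast
qed

lemma walks_fuel_efficiently_initial_set: "walks_fuel_efficiently strength initial_set ''l'' V E s"
  unfolding walks_fuel_efficiently_def
proof (intro exI conjI)
  have walk: "is_walk E s (fprime ribbon_end S) \<and> fuel S = 2 * (length (fprime ribbon_end S) - 1)"
    if S: "focused ''l'' S \<and> nascent initial_set S \<and> valid_seq strength initial_set S" for S
  proof -
    obtain W where W: "is_walk E s W" "S = ribbon_seq W"
      using S focused_nascent_seq_ribbon_seq by blast
    thus ?thesis using fprime_ribbon_seq[OF W(1)] fuel_ribbon_seq[of W] by simp
  qed
  show "walking_fun strength initial_set ''l'' V E s ribbon_end"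
    unfolding walking_fun_def
    using ribbon_end_Some walk ribbon_seq_valid fprime_ribbon_seq edge_extends by blast
  show "\<forall>S. focused ''l'' S \<and> nascent initial_set S \<and> valid_seq strength initial_set S \<longrightarrow>
      real (fuel S) / real (length (fprime ribbon_end S)) \<le> 2"
  proof (intro allI impI)
    fix S assume "focused ''l'' S \<and> nascent initial_set S \<and> valid_seq strength initial_set S"
    with walk have "fuel S = 2 * (length (fprime ribbon_end S) - 1)" "fprime ribbon_end S \<noteq> []"
      by (auto dest: is_walk_nonempty)
    thus "real (fuel S) / real (length (fprime ribbon_end S)) \<le> 2"
      by (simp add: divide_le_eq)
  qed
qed

lemma initial_set_size:
  "finite initial_set" "card initial_set \<le> 2 * (card V + card E)" "\<forall>a\<in>initial_set. card a \<le> 3"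
proof -
  have finite_E: "finite E" using finite_subset[OF E_sub] finite_V by blast
  show "finite initial_set" unfolding initial_set_def edge_bricks_def using finite_E by simp
  have "card edge_bricks \<le> card (UNIV \<times> E :: (bool \<times> nat \<times> nat) set)"
    unfolding edge_bricks_def by (rule card_image_le) (simp add: finite_E)
  hence "card initial_set \<le> Suc (2 * card E)"
    unfolding initial_set_def using card_insert_le_m1[of _ edge_bricks] by (simp add: card_cartesian_product)
  moreover have "card V \<ge> 1" using start_in finite_V by (cases "card V") auto
  ultimately show "card initial_set \<le> 2 * (card V + card E)" by simp
  show "\<forall>a\<in>initial_set. card a \<le> 3"
    using card_ribbon[of "[s]"]
    by (auto simp: initial_set_def edge_bricks_def brick_def card_insert_if)
qed

end

theorem theorem1:
  shows "\<exists>c1 c2 :: nat. \<forall>(V :: nat set) (E :: (nat \<times> nat) set) s.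
     finite V \<and> E \<subseteq> V \<times> V \<and> s \<in> V \<longrightarrow>
     (\<exists>(str :: nat \<Rightarrow> rat) (T :: nat assembly set) (l :: string).
        finite T \<and> (\<forall>a\<in>T. stable_asm str a) \<and>
        walks_fuel_efficiently str T l V E s \<and>
        card T \<le> c1 * (card V + card E) \<and>
        (\<forall>a\<in>T. card a \<le> c2))"
proof (rule exI[of _ 2], rule exI[of _ 3], intro allI impI)
  fix V :: "nat set" and E :: "(nat \<times> nat) set" and s
  assume "finite V \<and> E \<subseteq> V \<times> V \<and> s \<in> V"
  then interpret start_graph V E s by unfold_locales auto
  have "\<forall>a\<in>initial_set. stable_asm strength a"
    using walk_assemblies_stable producible_walk_assemblies producible.init by blast
  thus "\<exists>(str :: nat \<Rightarrow> rat) (T :: nat assembly set) (l :: string).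
        finite T \<and> (\<forall>a\<in>T. stable_asm str a) \<and> walks_fuel_efficiently str T l V E s \<and>
        card T \<le> 2 * (card V + card E) \<and> (\<forall>a\<in>T. card a \<le> 3)"
    using initial_set_size walks_fuel_efficiently_initial_set by blast
qed

end
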